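(* Let $A \in \mathbb{R}^{m \times n_x}$, $a \in \mathbb{R}^m$, $C \in \mathbb{R}^{\ell \times n_x}$, $D \in \mathbb{R}^{\ell \times n_y}$, $b \in \mathbb{R}^\ell$, $d \in \mathbb{R}^{n_y}$ satisfy: the set $\{(x,y) : Ax \ge a,\ Cx + Dy \ge b\}$ is nonempty and compact, for every $x$ with $Ax \ge a$ there exists $y$ with $Cx + Dy \ge b$, and $\{x : Ax \ge a\}$ is bounded. For $x$ with $Ax \ge a$, consider the lower-level linear program $\min_{y}\{ d^\top y : Dy \ge b - Cx\}$ and its dual $\max_z \{(b - Cx)^\top z : D^\top z = d,\ z \ge 0\}$. Then there is a constant $\kappa(A,C,D,a,b,d) > 0$, depending only on $A,C,D,a,b,d$ and whose encoding size is polynomial in the encoding size of these data, such that the following holds for every $\varepsilon > 0$ and every $x$ with $Ax \ge a$: if $\hat{y} \in \mathbb{R}^{n_y}$ and $\hat{z} \in \mathbb{R}^\ell$ satisfy (i) $D\hat{y} \ge b - Cx - \varepsilon e_\ell$, (ii) $\|D^\top \hat{z} - d\|_\infty \le \varepsilon$ and $\hat{z} \ge -\varepsilon e_\ell$, and (iii) $d^\top \hat{y} - (b - Cx)^\top \hat{z} \le \varepsilon$, then there exists an optimal solution $y^*$ of the lower-level problem $\min_y\{d^\top y : Dy \ge b - Cx\}$ with $\|y^* - \hat{y}\|_1 \le \varepsilon\, \kappa(A,C,D,a,b,d)$.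
   Context: $e_k \in \mathbb{R}^k$ denotes the all-ones vector. *)

theory Defs
  imports "HOL-Analysis.Analysis"
begin

text \<open>Vectors in R^n are represented as functions nat => real (only indices < n matter);
  matrices as nat => nat => _ (rows i < rows, columns j < cols).
  The data A, a, C, D, b, d are rational, so that their encoding size is defined.\<close>

definition vec_set :: "nat \<Rightarrow> (nat \<Rightarrow> real) set" where
  "vec_set n = {x. \<forall>j\<ge>n. x j = 0}"

definition mat_vec :: "(nat \<Rightarrow> nat \<Rightarrow> rat) \<Rightarrow> nat \<Rightarrow> (nat \<Rightarrow> real) \<Rightarrow> nat \<Rightarrow> real" where
  "mat_vec M n v i = (\<Sum>j<n. real_of_rat (M i j) * v j)"

definition ul_feasible :: "nat \<Rightarrow> nat \<Rightarrow> (nat \<Rightarrow> nat \<Rightarrow> rat) \<Rightarrow> (nat \<Rightarrow> rat) \<Rightarrow> (nat \<Rightarrow> real) \<Rightarrow> bool" where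
  "ul_feasible m nx A a x \<longleftrightarrow> (\<forall>i<m. mat_vec A nx x i \<ge> real_of_rat (a i))"

definition ll_feasible :: "nat \<Rightarrow> nat \<Rightarrow> nat \<Rightarrow> (nat \<Rightarrow> nat \<Rightarrow> rat) \<Rightarrow> (nat \<Rightarrow> nat \<Rightarrow> rat)
    \<Rightarrow> (nat \<Rightarrow> rat) \<Rightarrow> (nat \<Rightarrow> real) \<Rightarrow> (nat \<Rightarrow> real) \<Rightarrow> bool" where
  "ll_feasible l nx ny C D b x y \<longleftrightarrow>
     (\<forall>i<l. mat_vec D ny y i \<ge> real_of_rat (b i) - mat_vec C nx x i)"

definition ll_optimal :: "nat \<Rightarrow> nat \<Rightarrow> nat \<Rightarrow> (nat \<Rightarrow> nat \<Rightarrow> rat) \<Rightarrow> (nat \<Rightarrow> nat \<Rightarrow> rat)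
    \<Rightarrow> (nat \<Rightarrow> rat) \<Rightarrow> (nat \<Rightarrow> rat) \<Rightarrow> (nat \<Rightarrow> real) \<Rightarrow> (nat \<Rightarrow> real) \<Rightarrow> bool" where
  "ll_optimal l nx ny C D b d x y \<longleftrightarrow>
     ll_feasible l nx ny C D b x y \<and>
     (\<forall>y'. ll_feasible l nx ny C D b x y' \<longrightarrow>
        (\<Sum>j<ny. real_of_rat (d j) * y j) \<le> (\<Sum>j<ny. real_of_rat (d j) * y' j))"

text \<open>Encoding sizes (Schrijver's convention): integers, rationals p/q in lowest terms,
  vectors (n + sum of entry sizes), matrices (m n + sum of entry sizes).\<close>
definition size_int :: "int \<Rightarrow> nat" where
  "size_int z = 1 + nat \<lceil>log 2 (real_of_int \<bar>z\<bar> + 1)\<rceil>"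

definition size_rat :: "rat \<Rightarrow> nat" where
  "size_rat r = (case quotient_of r of (p, q) \<Rightarrow> size_int p + size_int q)"

definition size_vec :: "nat \<Rightarrow> (nat \<Rightarrow> rat) \<Rightarrow> nat" where
  "size_vec n v = n + (\<Sum>j<n. size_rat (v j))"

definition size_mat :: "nat \<Rightarrow> nat \<Rightarrow> (nat \<Rightarrow> nat \<Rightarrow> rat) \<Rightarrow> nat" where
  "size_mat r c M = r * c + (\<Sum>i<r. \<Sum>j<c. size_rat (M i j))"

end

theory Submission
  imports Defs "Jordan_Normal_Form.Determinant"
begin

(* Fix x and an optimal lower-level solution y0. The approximate primal and dual conditions,
   through approximate weak duality, show that yh violates the system D y >= b - C x,
   d^T y <= d^T y0 (whose solutions are exactly the optimal lower-level solutions) by at most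
   eps K, where K = 1 + |y0|_1 + (total slack of y0). Hoffman's error bound for this system, whose
   matrix does not depend on x, gives an optimal solution within n_y H eps K of yh. After scaling by
   a common denominator the matrix is integral, and H is bounded by Farkas' lemma (proved by
   Fourier-Motzkin elimination), a reduction to multipliers supported on independent rows, and
   Cramer's rule for the Gram matrix of these rows; hence H <= 2^poly(size). The same argument
   bounds the bounded upper- and lower-level feasible regions, hence K, by 2^poly(size), so kappa
   can be chosen as a power of two of polynomial encoding size. *)

section \<open>Linear inequality systems and Farkas' lemma\<close>

definition feasible :: "nat set \<Rightarrow> nat \<Rightarrow> (nat \<Rightarrow> nat \<Rightarrow> real) \<Rightarrow> (nat \<Rightarrow> real) \<Rightarrow> (nat \<Rightarrow> real) \<Rightarrow> bool"
  where "feasible I n g h y \<longleftrightarrow> (\<forall>i\<in>I. h i \<le> (\<Sum>j<n. g i j * y j))"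

(* Fourier-Motzkin elimination of the variable n: rows with a zero coefficient at n are kept
   (even indices), and every pair of a row with positive and a row with negative coefficient
   is combined so that the variable cancels (odd indices, encoding the pair). *)
definition fm_index :: "nat \<Rightarrow> (nat \<Rightarrow> nat \<Rightarrow> real) \<Rightarrow> nat set \<Rightarrow> nat set" where
  "fm_index n g I = (\<lambda>i. 2 * i) ` {i\<in>I. g i n = 0}
     \<union> (\<lambda>p. Suc (2 * prod_encode p)) ` ({i\<in>I. 0 < g i n} \<times> {k\<in>I. g k n < 0})"

definition fm_row :: "nat \<Rightarrow> (nat \<Rightarrow> nat \<Rightarrow> real) \<Rightarrow> (nat \<Rightarrow> real) \<Rightarrow> nat \<Rightarrow> real" where
  "fm_row n g f q = (if even q then f (q div 2)
     else case prod_decode (q div 2) of (i, k) \<Rightarrow> - g k n * f i + g i n * f k)"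

lemma fm_row_even [simp]: "fm_row n g f (2 * i) = f i"
  by (simp add: fm_row_def)

lemma fm_row_odd [simp]: "fm_row n g f (Suc (2 * prod_encode (i, k))) = - g k n * f i + g i n * f k"
  by (simp add: fm_row_def)

lemma fm_row_linear:
  "(\<Sum>j<n. fm_row n' g (\<lambda>i. g i j) q * y j) = fm_row n' g (\<lambda>i. \<Sum>j<n. g i j * y j) q"
  by (simp add: fm_row_def ring_distribs sum.distrib sum_distrib_left mult.assoc sum_negf sum_subtractf
      split: prod.split)

lemma fm_row_eliminates: "q \<in> fm_index n g I \<Longrightarrow> fm_row n g (\<lambda>i. g i n) q = 0"
  by (auto simp: fm_index_def)

lemma sum_fm_index:
  assumes "finite I"
  shows "(\<Sum>q\<in>fm_index n g I. F q) = (\<Sum>i\<in>{i\<in>I. g i n = 0}. F (2 * i))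
           + (\<Sum>i\<in>{i\<in>I. 0 < g i n}. \<Sum>k\<in>{k\<in>I. g k n < 0}. F (Suc (2 * prod_encode (i, k))))"
proof -
  let ?Z = "{i\<in>I. g i n = 0}" and ?P = "{i\<in>I. 0 < g i n}" and ?N = "{k\<in>I. g k n < 0}"
  let ?even = "\<lambda>i::nat. 2 * i" and ?odd = "\<lambda>p. Suc (2 * prod_encode p)"
  have inj_even: "inj_on ?even ?Z" by (auto simp: inj_on_def)
  have inj_odd: "inj_on ?odd (?P \<times> ?N)"
    by (auto simp: inj_on_def dest: inj_onD[OF inj_prod_encode, of _ _ UNIV, simplified])
  have "?even ` ?Z \<inter> ?odd ` (?P \<times> ?N) = {}" by auto presburger
  then have "(\<Sum>q\<in>fm_index n g I. F q) = (\<Sum>q\<in>?even ` ?Z. F q) + (\<Sum>q\<in>?odd ` (?P \<times> ?N). F q)"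
    unfolding fm_index_def using assms by (intro sum.union_disjoint) auto
  also have "\<dots> = (\<Sum>i\<in>?Z. F (2 * i)) + (\<Sum>(i, k)\<in>?P \<times> ?N. F (Suc (2 * prod_encode (i, k))))"
    by (simp add: sum.reindex[OF inj_even] sum.reindex[OF inj_odd] comp_def)
  finally show ?thesis by (simp add: sum.cartesian_product)
qed

lemma exists_between_finite:
  fixes A B :: "real set"
  assumes "finite A" "finite B" "\<forall>a\<in>A. \<forall>b\<in>B. a \<le> b"
  shows "\<exists>t. (\<forall>a\<in>A. a \<le> t) \<and> (\<forall>b\<in>B. t \<le> b)"
proof (cases "A = {}")
  case True
  then show ?thesis using assms(2) by (cases "B = {}") (auto intro!: exI[of _ "Min B"])
next
  case False
  then show ?thesis using assms by (intro exI[of _ "Max A"]) auto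
qed

lemma fm_feasible_lift:
  assumes "finite I"
    and "feasible (fm_index n g I) n (\<lambda>q j. fm_row n g (\<lambda>i. g i j) q) (fm_row n g h) y"
  shows "\<exists>t. feasible I (Suc n) g h (y(n := t))"
proof -
  define S where "S i = (\<Sum>j<n. g i j * y j)" for i
  define P where "P = {i\<in>I. 0 < g i n}"
  define N where "N = {i\<in>I. g i n < 0}"
  define lo where "lo i = (h i - S i) / g i n" for i
  have fin: "finite P" "finite N" using assms(1) by (auto simp: P_def N_def)
  have rows: "fm_row n g h q \<le> fm_row n g S q" if "q \<in> fm_index n g I" for q
    using assms(2) that by (simp add: feasible_def fm_row_linear S_def[abs_def])
  have zero: "h i \<le> S i" if "i \<in> I" "g i n = 0" for i
    using rows[of "2 * i"] that by (simp add: fm_index_def)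
  have lo_le: "lo i \<le> lo k" if "i \<in> P" "k \<in> N" for i k
  proof -
    have "Suc (2 * prod_encode (i, k)) \<in> fm_index n g I"
      using that unfolding fm_index_def P_def N_def by force
    from rows[OF this] have "- g k n * h i + g i n * h k \<le> - g k n * S i + g i n * S k" by simp
    moreover have "0 < g i n" "g k n < 0" using that by (auto simp: P_def N_def)
    ultimately show ?thesis unfolding lo_def by (simp add: divide_simps) (simp add: algebra_simps)
  qed
  obtain t where t: "\<forall>i\<in>P. lo i \<le> t" "\<forall>k\<in>N. t \<le> lo k"
    using exists_between_finite[of "lo ` P" "lo ` N"] fin lo_le by auto
  have "h i \<le> S i + g i n * t" if "i \<in> I" for i
  proof -
    consider "g i n = 0" | "0 < g i n" | "g i n < 0" by linarith
    then show ?thesis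
    proof cases
      case 2
      with t(1) that show ?thesis by (simp add: P_def lo_def divide_simps algebra_simps)
    next
      case 3
      with t(2) that show ?thesis by (simp add: N_def lo_def divide_simps algebra_simps)
    qed (use zero that in auto)
  qed
  then show ?thesis by (auto simp: feasible_def S_def intro!: exI[of _ t])
qed

lemma fm_multiplier_lift:
  assumes "finite I" and v: "\<forall>q\<in>fm_index n g I. 0 \<le> v q"
  shows "\<exists>u. (\<forall>i\<in>I. 0 \<le> u i)
           \<and> (\<forall>f. (\<Sum>i\<in>I. u i * f i) = (\<Sum>q\<in>fm_index n g I. v q * fm_row n g f q))"
proof -
  let ?Z = "{i\<in>I. g i n = 0}" and ?P = "{i\<in>I. 0 < g i n}" and ?N = "{k\<in>I. g k n < 0}"
  let ?v = "\<lambda>i k. v (Suc (2 * prod_encode (i, k)))"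
  define u where "u i = (if g i n = 0 then v (2 * i)
      else if 0 < g i n then (\<Sum>k\<in>?N. - g k n * ?v i k) else (\<Sum>i'\<in>?P. g i' n * ?v i' i))" for i
  have vZ: "0 \<le> v (2 * i)" if "i \<in> ?Z" for i
    using v that by (auto simp: fm_index_def)
  have vPN: "0 \<le> ?v i k" if "i \<in> ?P" "k \<in> ?N" for i k
    using v that unfolding fm_index_def by force
  have "0 \<le> u i" if "i \<in> I" for i
    using that vZ vPN by (auto simp: u_def intro!: sum_nonneg mult_nonneg_nonneg mult_nonpos_nonneg)
  moreover have "(\<Sum>i\<in>I. u i * f i) = (\<Sum>q\<in>fm_index n g I. v q * fm_row n g f q)" for f
  proof -
    have "(\<Sum>i\<in>I. u i * f i) = (\<Sum>i\<in>?Z \<union> (?P \<union> ?N). u i * f i)"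
      by (rule sum.cong) auto
    also have "\<dots> = (\<Sum>i\<in>?Z. u i * f i) + (\<Sum>i\<in>?P. u i * f i) + (\<Sum>i\<in>?N. u i * f i)"
      using assms(1) by (subst sum.union_disjoint, auto)+
    also have "\<dots> = (\<Sum>i\<in>?Z. v (2 * i) * f i) + (\<Sum>i\<in>?P. \<Sum>k\<in>?N. - g k n * ?v i k * f i)
        + (\<Sum>k\<in>?N. \<Sum>i\<in>?P. g i n * ?v i k * f k)"
      by (simp add: u_def sum_distrib_right)
    also have "\<dots> = (\<Sum>i\<in>?Z. v (2 * i) * f i)
        + (\<Sum>i\<in>?P. \<Sum>k\<in>?N. ?v i k * (- g k n * f i + g i n * f k))"
      by (simp add: sum.swap[of _ ?N] sum.distrib[symmetric] algebra_simps)
    also have "\<dots> = (\<Sum>q\<in>fm_index n g I. v q * fm_row n g f q)"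
      using assms(1) by (simp add: sum_fm_index)
    finally show ?thesis .
  qed
  ultimately show ?thesis by blast
qed

theorem farkas:
  assumes "finite I" and "\<nexists>y. feasible I n g h y"
  shows "\<exists>u. (\<forall>i\<in>I. 0 \<le> u i) \<and> (\<forall>j<n. (\<Sum>i\<in>I. u i * g i j) = 0) \<and> 0 < (\<Sum>i\<in>I. u i * h i)"
  using assms
proof (induction n arbitrary: I g h)
  case 0
  then obtain i where i: "i \<in> I" "0 < h i" by (auto simp: feasible_def not_le)
  then have "I \<inter> {k. k = i} = {i}" by auto
  with i "0.prems"(1) show ?case by (intro exI[of _ "\<lambda>k. of_bool (k = i)"]) simp
next
  case (Suc n)
  let ?I' = "fm_index n g I"
  have "finite ?I'" using Suc.prems(1) by (simp add: fm_index_def)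
  moreover have "\<nexists>y. feasible ?I' n (\<lambda>q j. fm_row n g (\<lambda>i. g i j) q) (fm_row n g h) y"
    using fm_feasible_lift[OF Suc.prems(1)] Suc.prems(2) by blast
  ultimately obtain v where v: "\<forall>q\<in>?I'. 0 \<le> v q"
    "\<forall>j<n. (\<Sum>q\<in>?I'. v q * fm_row n g (\<lambda>i. g i j) q) = 0" "0 < (\<Sum>q\<in>?I'. v q * fm_row n g h q)"
    using Suc.IH by blast
  obtain u where u: "\<forall>i\<in>I. 0 \<le> u i"
    "\<And>f. (\<Sum>i\<in>I. u i * f i) = (\<Sum>q\<in>?I'. v q * fm_row n g f q)"
    using fm_multiplier_lift[OF Suc.prems(1) v(1)] by blast
  have "(\<Sum>i\<in>I. u i * g i j) = 0" if "j < Suc n" for j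
  proof (cases "j = n")
    case True
    then show ?thesis by (simp add: u(2) fm_row_eliminates)
  qed (use that v(2) u(2) in auto)
  then show ?case using u v(3) by auto
qed

section \<open>Multipliers supported on independent rows\<close>

definition indep_rows :: "nat \<Rightarrow> nat \<Rightarrow> (nat \<Rightarrow> nat \<Rightarrow> real) \<Rightarrow> nat set \<Rightarrow> bool" where
  "indep_rows p n g B \<longleftrightarrow>
     (\<forall>w. (\<forall>i<p. i \<notin> B \<longrightarrow> w i = 0) \<and> (\<forall>j<n. (\<Sum>i<p. w i * g i j) = 0) \<longrightarrow> (\<forall>i<p. w i = 0))"

lemma sum_rows_cols_swap:
  fixes u y :: "nat \<Rightarrow> real"
  shows "(\<Sum>j<n. (\<Sum>i<p. u i * g i j) * y j) = (\<Sum>i<p. u i * (\<Sum>j<n. g i j * y j))"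
  by (simp add: sum_distrib_left sum_distrib_right mult_ac) (rule sum.swap)

lemma feasible_multiplier_nonpos:
  assumes "feasible {..<p} n g r z" and "\<forall>i<p. 0 \<le> w i" and "\<forall>j<n. (\<Sum>i<p. w i * g i j) = 0"
  shows "(\<Sum>i<p. w i * r i) \<le> 0"
proof -
  have "(\<Sum>i<p. w i * r i) \<le> (\<Sum>i<p. w i * (\<Sum>j<n. g i j * z j))"
    using assms(1,2) by (intro sum_mono mult_left_mono) (auto simp: feasible_def)
  also have "\<dots> = 0" using assms(3) by (simp flip: sum_rows_cols_swap)
  finally show ?thesis .
qed

lemma dependent_support_direction:
  assumes "\<not> indep_rows p n g {i. u i \<noteq> 0}" and "feasible {..<p} n g r z"
  shows "\<exists>w. (\<forall>i<p. u i = 0 \<longrightarrow> w i = 0) \<and> (\<forall>j<n. (\<Sum>i<p. w i * g i j) = 0)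
           \<and> (\<exists>i<p. w i < 0) \<and> 0 \<le> (\<Sum>i<p. w i * r i)"
proof -
  obtain w0 where w0: "\<forall>i<p. u i = 0 \<longrightarrow> w0 i = 0" "\<forall>j<n. (\<Sum>i<p. w0 i * g i j) = 0"
    and "\<exists>i<p. w0 i \<noteq> 0"
    using assms(1) unfolding indep_rows_def by auto
  have neg: "\<forall>j<n. (\<Sum>i<p. - w0 i * g i j) = 0" "(\<Sum>i<p. - w0 i * r i) = - (\<Sum>i<p. w0 i * r i)"
    using w0(2) by (simp_all add: sum_negf)
  \<comment> \<open>of the two directions \<open>\<pm>w0\<close>, take one with nonnegative objective; if it has no negative
    entry, the recession cone forces its objective to vanish and the other one works\<close>
  obtain w where w: "w = w0 \<or> w = (\<lambda>i. - w0 i)" and r: "0 \<le> (\<Sum>i<p. w i * r i)"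
  proof (cases "0 \<le> (\<Sum>i<p. w0 i * r i)")
    case False
    then show ?thesis using that[of "\<lambda>i. - w0 i"] neg(2) by simp
  qed blast
  show ?thesis
  proof (cases "\<exists>i<p. w i < 0")
    case True
    then show ?thesis using w w0 neg r by (intro exI[of _ w]) auto
  next
    case False
    then have "\<forall>i<p. 0 \<le> w i" by (meson not_less)
    moreover have "\<forall>j<n. (\<Sum>i<p. w i * g i j) = 0" using w w0 neg by auto
    ultimately have "(\<Sum>i<p. w i * r i) = 0"
      using feasible_multiplier_nonpos[OF assms(2)] r by (meson antisym)
    moreover have "\<exists>i<p. - w i < 0"
    proof -
      obtain i where i: "i < p" "w0 i \<noteq> 0" using \<open>\<exists>i<p. w0 i \<noteq> 0\<close> by blast
      then have "0 < w i" using w \<open>\<forall>i<p. 0 \<le> w i\<close> by (auto simp: less_le)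
      with i show ?thesis by auto
    qed
    ultimately show ?thesis using w w0 neg
      by (intro exI[of _ "\<lambda>i. - w i"]) (auto simp: sum_negf)
  qed
qed

lemma support_shrink_step:
  fixes u w r :: "nat \<Rightarrow> real" and g :: "nat \<Rightarrow> nat \<Rightarrow> real"
  assumes u: "\<forall>i<p. 0 \<le> u i"
    and w: "\<forall>i<p. u i = 0 \<longrightarrow> w i = 0" "\<forall>j<n. (\<Sum>i<p. w i * g i j) = 0"
      "\<exists>i<p. w i < 0" "0 \<le> (\<Sum>i<p. w i * r i)"
  shows "\<exists>u'. (\<forall>i<p. 0 \<le> u' i) \<and> (\<forall>j<n. (\<Sum>i<p. u' i * g i j) = (\<Sum>i<p. u i * g i j))
           \<and> (\<Sum>i<p. u i * r i) \<le> (\<Sum>i<p. u' i * r i) \<and> {i. i < p \<and> u' i \<noteq> 0} \<subset> {i. i < p \<and> u i \<noteq> 0}"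
proof -
  define Neg where "Neg = {i. i < p \<and> w i < 0}"
  define t where "t = Min ((\<lambda>i. u i / - w i) ` Neg)"
  have Neg: "finite Neg" "Neg \<noteq> {}" using w(3) by (auto simp: Neg_def)
  then have "t \<in> (\<lambda>i. u i / - w i) ` Neg" unfolding t_def by (intro Min_in) auto
  then obtain i1 where i1: "i1 < p" "w i1 < 0" "t = u i1 / - w i1" by (auto simp: Neg_def)
  have t_le: "t \<le> u i / - w i" if "i < p" "w i < 0" for i
    using Neg that by (auto simp: t_def Neg_def)
  have t0: "0 \<le> t" using i1 u by (simp add: divide_nonneg_neg)
  define u' where "u' i = u i + t * w i" for i
  have "0 \<le> u' i" if "i < p" for i
  proof (cases "w i < 0")
    case True
    with t_le[OF that True] show ?thesis by (simp add: u'_def divide_simps algebra_simps)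
  qed (use t0 u that in \<open>simp add: u'_def\<close>)
  moreover have "{i. i < p \<and> u' i \<noteq> 0} \<subset> {i. i < p \<and> u i \<noteq> 0}"
  proof -
    have "u' i1 = 0" "u i1 \<noteq> 0" using i1 w(1) by (auto simp: u'_def)
    then show ?thesis using w(1) i1(1) by (auto simp: u'_def)
  qed
  moreover have "(\<Sum>i<p. u' i * f i) = (\<Sum>i<p. u i * f i) + t * (\<Sum>i<p. w i * f i)" for f
    by (simp add: u'_def sum.distrib sum_distrib_left algebra_simps)
  ultimately show ?thesis using w(2,4) t0 by (intro exI[of _ u']) auto
qed

lemma independent_support_multiplier:
  assumes "\<forall>i<p. 0 \<le> u i" and "feasible {..<p} n g r z"
  shows "\<exists>u'. (\<forall>i<p. 0 \<le> u' i) \<and> (\<forall>j<n. (\<Sum>i<p. u' i * g i j) = (\<Sum>i<p. u i * g i j))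
           \<and> (\<Sum>i<p. u i * r i) \<le> (\<Sum>i<p. u' i * r i) \<and> indep_rows p n g {i. u' i \<noteq> 0}"
  using assms(1)
proof (induction "card {i. i < p \<and> u i \<noteq> 0}" arbitrary: u rule: less_induct)
  case less
  show ?case
  proof (cases "indep_rows p n g {i. u i \<noteq> 0}")
    case False
    obtain w where w: "\<forall>i<p. u i = 0 \<longrightarrow> w i = 0" "\<forall>j<n. (\<Sum>i<p. w i * g i j) = 0"
      "\<exists>i<p. w i < 0" "0 \<le> (\<Sum>i<p. w i * r i)"
      using dependent_support_direction[OF False assms(2)] by blast
    obtain u2 where u2: "\<forall>i<p. 0 \<le> u2 i"
      "\<forall>j<n. (\<Sum>i<p. u2 i * g i j) = (\<Sum>i<p. u i * g i j)" "(\<Sum>i<p. u i * r i) \<le> (\<Sum>i<p. u2 i * r i)"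
      "{i. i < p \<and> u2 i \<noteq> 0} \<subset> {i. i < p \<and> u i \<noteq> 0}"
      using support_shrink_step[OF less.prems w] by blast
    have "card {i. i < p \<and> u2 i \<noteq> 0} < card {i. i < p \<and> u i \<noteq> 0}"
      using u2(4) by (intro psubset_card_mono) auto
    from less.hyps[OF this u2(1)] obtain u' where u': "\<forall>i<p. 0 \<le> u' i"
      "\<forall>j<n. (\<Sum>i<p. u' i * g i j) = (\<Sum>i<p. u2 i * g i j)" "(\<Sum>i<p. u2 i * r i) \<le> (\<Sum>i<p. u' i * r i)"
      "indep_rows p n g {i. u' i \<noteq> 0}"
      by blast
    have "(\<Sum>i<p. u i * r i) \<le> (\<Sum>i<p. u' i * r i)" using u2(3) u'(3) by linarith
    with u' u2(2) show ?thesis by (intro exI[of _ u']) simp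
  qed (use less.prems in \<open>intro exI[of _ u], simp\<close>)
qed

section \<open>Cramer bounds through Gram matrices\<close>

(* The Gram matrix of the rows in B, padded with the identity outside B so that it is
   invertible exactly when these rows are independent. *)
definition gram_mat :: "nat \<Rightarrow> nat \<Rightarrow> (nat \<Rightarrow> nat \<Rightarrow> real) \<Rightarrow> nat set \<Rightarrow> real mat" where
  "gram_mat p n g B =
     mat p p (\<lambda>(i, k). if i \<in> B \<and> k \<in> B then \<Sum>j<n. g i j * g k j else of_bool (i = k))"

lemma gram_mat_carrier [simp]: "gram_mat p n g B \<in> carrier_mat p p"
  and dim_gram_mat: "dim_row (gram_mat p n g B) = p" "dim_col (gram_mat p n g B) = p"
  by (simp_all add: gram_mat_def)

lemma gram_mat_mult_vec_index:
  assumes "i < p"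
  shows "(gram_mat p n g B *\<^sub>v vec p u) $ i =
           (if i \<in> B then \<Sum>j<n. g i j * (\<Sum>k\<in>{..<p} \<inter> B. u k * g k j) else u i)"
proof -
  have entry: "(gram_mat p n g B *\<^sub>v vec p u) $ i =
      (\<Sum>k<p. (if i \<in> B \<and> k \<in> B then \<Sum>j<n. g i j * g k j else of_bool (i = k)) * u k)"
    using assms by (simp add: gram_mat_def scalar_prod_def atLeast0LessThan)
  show ?thesis
  proof (cases "i \<in> B")
    case True
    have "(gram_mat p n g B *\<^sub>v vec p u) $ i =
        (\<Sum>k<p. if k \<in> B then (\<Sum>j<n. g i j * g k j) * u k else 0)"
      unfolding entry using True by (intro sum.cong) auto
    also have "\<dots> = (\<Sum>k\<in>{..<p} \<inter> B. (\<Sum>j<n. g i j * g k j) * u k)"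
      by (simp add: sum.inter_restrict)
    also have "\<dots> = (\<Sum>j<n. g i j * (\<Sum>k\<in>{..<p} \<inter> B. u k * g k j))"
      by (simp add: sum_distrib_left sum_distrib_right mult_ac) (rule sum.swap)
    finally show ?thesis using True by simp
  next
    case False
    have "(gram_mat p n g B *\<^sub>v vec p u) $ i = (\<Sum>k<p. if k = i then u k else 0)"
      unfolding entry using False by (intro sum.cong) auto
    then show ?thesis using False assms by simp
  qed
qed

lemma det_gram_mat_nonzero:
  assumes "indep_rows p n g B"
  shows "det (gram_mat p n g B) \<noteq> 0"
proof
  assume "det (gram_mat p n g B) = 0"
  then obtain v where v: "v \<in> carrier_vec p" "v \<noteq> 0\<^sub>v p" "gram_mat p n g B *\<^sub>v v = 0\<^sub>v p"
    using det_0_iff_vec_prod_zero[OF gram_mat_carrier] by blast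
  define w where "w i = (if i < p then v $ i else 0)" for i
  have vw: "v = vec p w" using v(1) by (auto simp: w_def)
  have row: "(gram_mat p n g B *\<^sub>v vec p w) $ i = 0" if "i < p" for i
    using v(3) that vw by simp
  have supp: "\<forall>i<p. i \<notin> B \<longrightarrow> w i = 0"
    using row gram_mat_mult_vec_index by fastforce
  define T where "T j = (\<Sum>k<p. w k * g k j)" for j
  have "{..<p} \<inter> B \<subseteq> {..<p}" "\<forall>k\<in>{..<p} - {..<p} \<inter> B. w k * g k j = 0" for j
    using supp by auto
  then have T_B: "(\<Sum>k\<in>{..<p} \<inter> B. w k * g k j) = T j" for j
    unfolding T_def by (intro sum.mono_neutral_left) auto
  have orth: "(\<Sum>j<n. g i j * T j) = 0" if "i < p" "i \<in> B" for i
    using row[OF that(1)] that by (simp add: gram_mat_mult_vec_index T_B)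
  have "(\<Sum>j<n. T j * T j) = (\<Sum>i<p. w i * (\<Sum>j<n. g i j * T j))"
    unfolding T_def sum_rows_cols_swap[symmetric] ..
  also have "\<dots> = 0" using supp orth by (intro sum.neutral) auto
  finally have "\<forall>j<n. T j = 0" by (simp add: sum_nonneg_eq_0_iff)
  then have "\<forall>i<p. w i = 0"
    using assms supp unfolding indep_rows_def T_def by blast
  then show False using v(2) vw by (auto simp: vec_eq_iff)
qed

lemma det_Ints:
  fixes A :: "real mat"
  assumes "A \<in> carrier_mat k k" and "\<forall>i<k. \<forall>j<k. A $$ (i, j) \<in> \<int>"
  shows "det A \<in> \<int>"
  using assms(2) unfolding det_def'[OF assms(1)]
  by (auto intro!: Ints_sum Ints_mult Ints_prod simp: permutes_in_image)

lemma abs_det_le: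
  fixes A :: "real mat"
  assumes "A \<in> carrier_mat k k" and "\<forall>i<k. \<forall>j<k. \<bar>A $$ (i, j)\<bar> \<le> c"
  shows "\<bar>det A\<bar> \<le> fact k * c ^ k"
proof -
  have "\<bar>det A\<bar> \<le> (\<Sum>\<pi> | \<pi> permutes {0..<k}. \<bar>of_int (sign \<pi>) * (\<Prod>i = 0..<k. A $$ (i, \<pi> i))\<bar>)"
    unfolding det_def'[OF assms(1)] by (rule sum_abs)
  also have "\<dots> \<le> (\<Sum>\<pi> | \<pi> permutes {0..<k}. c ^ k)"
  proof (rule sum_mono)
    fix \<pi> assume "\<pi> \<in> {\<pi>. \<pi> permutes {0..<k}}"
    then have "\<forall>i\<in>{0..<k}. \<pi> i \<in> {0..<k}" by (simp add: permutes_in_image)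
    then have "(\<Prod>i = 0..<k. \<bar>A $$ (i, \<pi> i)\<bar>) \<le> (\<Prod>i = 0..<k. c)"
      using assms(2) by (intro prod_mono) auto
    then show "\<bar>of_int (sign \<pi>) * (\<Prod>i = 0..<k. A $$ (i, \<pi> i))\<bar> \<le> c ^ k"
      by (simp add: abs_mult abs_prod sign_def)
  qed
  also have "\<dots> = fact k * c ^ k" by (simp add: card_permutations)
  finally show ?thesis .
qed

(* p times the bound p! ((n+1) M^2)^p on the Cramer numerators of the padded Gram matrix,
   whose entries are at most (n+1) M^2 *)
definition hoffman_const :: "nat \<Rightarrow> nat \<Rightarrow> real \<Rightarrow> real" where
  "hoffman_const p n M = real p * fact p * (real (Suc n) * M\<^sup>2) ^ p"

lemma hoffman_const_nonneg: "0 \<le> hoffman_const p n M"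
  by (simp add: hoffman_const_def)

lemma abs_gram_mat_le:
  assumes "\<forall>i<p. \<forall>j<n. \<bar>g i j\<bar> \<le> M" and "1 \<le> M" and "i < p" "k < p"
  shows "\<bar>gram_mat p n g B $$ (i, k)\<bar> \<le> real (Suc n) * M\<^sup>2"
proof -
  have "\<bar>\<Sum>j<n. g i j * g k j\<bar> \<le> (\<Sum>j<n. M * M)"
    using assms by (intro order_trans[OF sum_abs] sum_mono) (auto simp: abs_mult intro!: mult_mono)
  moreover have "(1::real) \<le> M\<^sup>2" using assms(2) by (simp add: one_le_power)
  ultimately show ?thesis using assms(3,4)
    by (auto simp: gram_mat_def power2_eq_square algebra_simps)
qed

lemma abs_gram_mat_mult_vec_le:
  assumes g: "\<forall>i<p. \<forall>j<n. \<bar>g i j\<bar> \<le> M" and M: "1 \<le> M"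
    and supp: "\<forall>i<p. i \<notin> B \<longrightarrow> u i = 0" and normed: "(\<Sum>j<n. \<bar>\<Sum>i<p. u i * g i j\<bar>) \<le> 1"
    and "i < p"
  shows "\<bar>(gram_mat p n g B *\<^sub>v vec p u) $ i\<bar> \<le> real (Suc n) * M\<^sup>2"
proof -
  have "(\<Sum>k\<in>{..<p} \<inter> B. u k * g k j) = (\<Sum>k<p. u k * g k j)" for j
    using supp by (intro sum.mono_neutral_left) auto
  then have "\<bar>(gram_mat p n g B *\<^sub>v vec p u) $ i\<bar> \<le> \<bar>\<Sum>j<n. g i j * (\<Sum>k<p. u k * g k j)\<bar>"
    using \<open>i < p\<close> by (simp add: gram_mat_mult_vec_index supp)
  also have "\<dots> \<le> (\<Sum>j<n. M * \<bar>\<Sum>k<p. u k * g k j\<bar>)"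
    using g \<open>i < p\<close> by (intro order_trans[OF sum_abs] sum_mono) (auto simp: abs_mult intro!: mult_right_mono)
  also have "\<dots> \<le> M * 1" using normed M by (simp flip: sum_distrib_left)
  also have "\<dots> \<le> M * M" using M by (intro mult_left_mono) auto
  also have "\<dots> = 1 * M\<^sup>2" by (simp add: power2_eq_square)
  also have "\<dots> \<le> real (Suc n) * M\<^sup>2" by (intro mult_right_mono) auto
  finally show ?thesis .
qed

lemma indep_coeff_bound:
  assumes g: "\<forall>i<p. \<forall>j<n. g i j \<in> \<int> \<and> \<bar>g i j\<bar> \<le> M" and M: "1 \<le> M"
    and indep: "indep_rows p n g B" and supp: "\<forall>i<p. i \<notin> B \<longrightarrow> u i = 0"
    and normed: "(\<Sum>j<n. \<bar>\<Sum>i<p. u i * g i j\<bar>) \<le> 1" and k: "k < p"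
  shows "\<bar>u k\<bar> \<le> fact p * (real (Suc n) * M\<^sup>2) ^ p"
proof -
  let ?G = "gram_mat p n g B" and ?\<gamma> = "real (Suc n) * M\<^sup>2"
  define b where "b = ?G *\<^sub>v vec p u"
  have "\<forall>i<p. \<forall>k<p. ?G $$ (i, k) \<in> \<int>"
    using g by (auto simp: gram_mat_def intro!: Ints_sum Ints_mult)
  then have det_ge: "1 \<le> \<bar>det ?G\<bar>"
    using det_Ints[OF gram_mat_carrier] det_gram_mat_nonzero[OF indep] by (simp add: Ints_nonzero_abs_ge1)
  have cramer: "det (replace_col ?G b k) = u k * det ?G"
    using cramer_lemma_mat[OF gram_mat_carrier _ k, of "vec p u"] k by (simp add: b_def)
  have gM: "\<forall>i<p. \<forall>j<n. \<bar>g i j\<bar> \<le> M" using g by blast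
  then have "\<bar>b $ i\<bar> \<le> ?\<gamma>" if "i < p" for i
    using abs_gram_mat_mult_vec_le[OF gM M supp normed that] by (simp add: b_def)
  then have "\<forall>i<p. \<forall>j<p. \<bar>replace_col ?G b k $$ (i, j)\<bar> \<le> ?\<gamma>"
    using abs_gram_mat_le[OF gM M] by (simp add: replace_col_def dim_gram_mat)
  then have "\<bar>det (replace_col ?G b k)\<bar> \<le> fact p * ?\<gamma> ^ p"
    by (intro abs_det_le) (auto simp: replace_col_def dim_gram_mat)
  moreover have "\<bar>u k\<bar> \<le> \<bar>u k\<bar> * \<bar>det ?G\<bar>" using det_ge by (simp add: mult_le_cancel_left1)
  ultimately show ?thesis by (simp add: cramer abs_mult)
qed

lemma sum_abs_indep_coeff_le:
  assumes g: "\<forall>i<p. \<forall>j<n. g i j \<in> \<int> \<and> \<bar>g i j\<bar> \<le> M" and M: "1 \<le> M"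
    and indep: "indep_rows p n g B" and supp: "\<forall>i<p. i \<notin> B \<longrightarrow> u i = 0"
  shows "(\<Sum>i<p. \<bar>u i\<bar>) \<le> hoffman_const p n M * (\<Sum>j<n. \<bar>\<Sum>i<p. u i * g i j\<bar>)"
proof (cases "(\<Sum>j<n. \<bar>\<Sum>i<p. u i * g i j\<bar>) = 0")
  case True
  then have "\<forall>j<n. (\<Sum>i<p. u i * g i j) = 0" by (simp add: sum_nonneg_eq_0_iff)
  then have "\<forall>i<p. u i = 0" using indep supp unfolding indep_rows_def by blast
  then show ?thesis by (simp add: hoffman_const_nonneg)
next
  case False
  define N where "N = (\<Sum>j<n. \<bar>\<Sum>i<p. u i * g i j\<bar>)"
  define F where "F = fact p * (real (Suc n) * M\<^sup>2) ^ p"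
  have N: "0 < N" using False unfolding N_def by (simp add: order_le_neq_trans sum_nonneg)
  \<comment> \<open>\<open>indep_coeff_bound\<close> is homogeneous, so it suffices to apply it to \<open>u / N\<close>\<close>
  have "(\<Sum>j<n. \<bar>\<Sum>i<p. u i / N * g i j\<bar>) = (\<Sum>j<n. \<bar>\<Sum>i<p. u i * g i j\<bar>) / N"
    using N by (simp add: abs_divide flip: sum_divide_distrib)
  then have "(\<Sum>j<n. \<bar>\<Sum>i<p. u i / N * g i j\<bar>) \<le> 1" using N by (simp add: N_def)
  then have "\<bar>u i / N\<bar> \<le> F" if "i < p" for i
    unfolding F_def using indep_coeff_bound[OF g M indep _ _ that, of "\<lambda>i. u i / N"] supp by simp
  then have "\<bar>u i\<bar> \<le> F * N" if "i < p" for i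
    using that N by (simp add: abs_divide pos_divide_le_eq)
  then have "(\<Sum>i<p. \<bar>u i\<bar>) \<le> (\<Sum>i<p. F * N)" by (intro sum_mono) auto
  also have "\<dots> = hoffman_const p n M * N" by (simp add: hoffman_const_def F_def)
  finally show ?thesis by (simp add: N_def)
qed

lemma small_multiplier:
  assumes g: "\<forall>i<p. \<forall>j<n. g i j \<in> \<int> \<and> \<bar>g i j\<bar> \<le> M" and M: "1 \<le> M"
    and u: "\<forall>i<p. 0 \<le> u i" and "feasible {..<p} n g r z"
  shows "\<exists>u'. (\<forall>i<p. 0 \<le> u' i) \<and> (\<forall>j<n. (\<Sum>i<p. u' i * g i j) = (\<Sum>i<p. u i * g i j))
           \<and> (\<Sum>i<p. u i * r i) \<le> (\<Sum>i<p. u' i * r i)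
           \<and> (\<Sum>i<p. u' i) \<le> hoffman_const p n M * (\<Sum>j<n. \<bar>\<Sum>i<p. u i * g i j\<bar>)"
proof -
  obtain u' where u': "\<forall>i<p. 0 \<le> u' i" "\<forall>j<n. (\<Sum>i<p. u' i * g i j) = (\<Sum>i<p. u i * g i j)"
    "(\<Sum>i<p. u i * r i) \<le> (\<Sum>i<p. u' i * r i)" "indep_rows p n g {i. u' i \<noteq> 0}"
    using independent_support_multiplier[OF assms(3,4)] by blast
  have "(\<Sum>i<p. u' i) = (\<Sum>i<p. \<bar>u' i\<bar>)" using u'(1) by simp
  also have "\<dots> \<le> hoffman_const p n M * (\<Sum>j<n. \<bar>\<Sum>i<p. u i * g i j\<bar>)"
    using sum_abs_indep_coeff_le[OF g M u'(4), where u = u'] u'(2) by simp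
  finally show ?thesis using u' by blast
qed

section \<open>Hoffman's error bound\<close>

lemma sum_lessThan_add:
  fixes a b :: nat
  shows "(\<Sum>q<a + b. F q) = (\<Sum>q<a. F q) + (\<Sum>j<b. F (a + j))"
  by (induction b) (simp_all add: add.assoc)

lemma farkas_box:
  assumes "0 \<le> T" and "\<nexists>y. feasible {..<p} n g h y \<and> (\<forall>j<n. \<bar>y j - yh j\<bar> \<le> T)"
  shows "\<exists>u. (\<forall>i<p. 0 \<le> u i)
           \<and> T * (\<Sum>j<n. \<bar>\<Sum>i<p. u i * g i j\<bar>) < (\<Sum>i<p. u i * (h i - (\<Sum>j<n. g i j * yh j)))"
proof -
  \<comment> \<open>the box constraints \<open>y j \<ge> yh j - T\<close> and \<open>- y j \<ge> - yh j - T\<close> become rows \<open>p + j\<close> and \<open>p + n + j\<close>\<close>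
  define G where "G q j = (if q < p then g q j
      else if q < p + n then of_bool (j = q - p) else - of_bool (j = q - p - n))" for q j
  define H where "H q = (if q < p then h q
      else if q < p + n then yh (q - p) - T else - yh (q - p - n) - T)" for q
  have split: "(\<Sum>q<p + n + n. F q) = (\<Sum>i<p. F i) + (\<Sum>j<n. F (p + j)) + (\<Sum>j<n. F (p + n + j))"
    for F :: "nat \<Rightarrow> real"
    by (simp add: sum_lessThan_add)
  have "\<nexists>y. feasible {..<p + n + n} n G H y"
  proof
    assume "\<exists>y. feasible {..<p + n + n} n G H y"
    then obtain y where y: "\<And>q. q < p + n + n \<Longrightarrow> H q \<le> (\<Sum>j<n. G q j * y j)"
      by (auto simp: feasible_def)
    have "h i \<le> (\<Sum>j<n. g i j * y j)" if "i < p" for i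
      using y[of i] that by (simp add: G_def H_def)
    then have "feasible {..<p} n g h y" by (simp add: feasible_def)
    moreover have "\<bar>y j - yh j\<bar> \<le> T" if "j < n" for j
      using y[of "p + j"] y[of "p + n + j"] that by (simp add: G_def H_def sum_negf abs_le_iff)
    ultimately show False using assms(2) by blast
  qed
  then obtain U where U: "\<forall>q<p + n + n. 0 \<le> U q" "\<forall>j<n. (\<Sum>q<p + n + n. U q * G q j) = 0"
    "0 < (\<Sum>q<p + n + n. U q * H q)"
    using farkas[of "{..<p + n + n}" n G H] by auto
  define c where "c j = (\<Sum>i<p. U i * g i j)" for j
  have c: "c j = U (p + n + j) - U (p + j)" if "j < n" for j
    using U(2)[rule_format, OF that] that by (simp add: split G_def c_def sum_negf Int_insert_right)
  have "(\<Sum>i<p. U i * (h i - (\<Sum>j<n. g i j * yh j))) = (\<Sum>i<p. U i * h i) - (\<Sum>j<n. c j * yh j)"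
    by (simp add: c_def sum_rows_cols_swap right_diff_distrib sum_subtractf)
  also have "\<dots> = (\<Sum>q<p + n + n. U q * H q) + T * (\<Sum>j<n. U (p + j) + U (p + n + j))"
    unfolding split by (simp add: H_def c algebra_simps sum.distrib sum_subtractf sum_distrib_left sum_negf)
  also have "\<dots> > T * (\<Sum>j<n. \<bar>c j\<bar>)"
  proof -
    have "\<bar>c j\<bar> \<le> U (p + j) + U (p + n + j)" if "j < n" for j
      using U(1)[rule_format, of "p + j"] U(1)[rule_format, of "p + n + j"] c[OF that] that by auto
    then have "T * (\<Sum>j<n. \<bar>c j\<bar>) \<le> T * (\<Sum>j<n. U (p + j) + U (p + n + j))"
      using assms(1) by (intro mult_left_mono sum_mono) auto
    then show ?thesis using U(3) by linarith
  qed
  finally show ?thesis using U(1) by (intro exI[of _ U]) (auto simp: c_def)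
qed

theorem hoffman_bound:
  assumes g: "\<forall>i<p. \<forall>j<n. g i j \<in> \<int> \<and> \<bar>g i j\<bar> \<le> M" and M: "1 \<le> M"
    and y0: "feasible {..<p} n g h y0" and \<eta>: "0 \<le> \<eta>"
    and yh: "\<forall>i<p. h i - \<eta> \<le> (\<Sum>j<n. g i j * yh j)"
  shows "\<exists>y. feasible {..<p} n g h y \<and> (\<forall>j<n. \<bar>y j - yh j\<bar> \<le> hoffman_const p n M * \<eta>)"
proof (rule ccontr)
  let ?T = "hoffman_const p n M * \<eta>"
  define r where "r i = h i - (\<Sum>j<n. g i j * yh j)" for i
  assume "\<not> ?thesis"
  then obtain u where u: "\<forall>i<p. 0 \<le> u i"
    and gap: "?T * (\<Sum>j<n. \<bar>\<Sum>i<p. u i * g i j\<bar>) < (\<Sum>i<p. u i * r i)"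
    using farkas_box[of ?T p n g h yh] \<eta> hoffman_const_nonneg unfolding r_def by auto
  have "feasible {..<p} n g r (\<lambda>j. y0 j - yh j)"
    using y0 by (simp add: feasible_def r_def right_diff_distrib sum_subtractf)
  then obtain u' where u': "\<forall>i<p. 0 \<le> u' i" "(\<Sum>i<p. u i * r i) \<le> (\<Sum>i<p. u' i * r i)"
    "(\<Sum>i<p. u' i) \<le> hoffman_const p n M * (\<Sum>j<n. \<bar>\<Sum>i<p. u i * g i j\<bar>)"
    using small_multiplier[OF g M u] by blast
  have "(\<Sum>i<p. u' i * r i) \<le> (\<Sum>i<p. u' i * \<eta>)"
    using u'(1) yh by (intro sum_mono mult_left_mono) (auto simp: r_def)
  also have "\<dots> = \<eta> * (\<Sum>i<p. u' i)" by (simp add: sum_distrib_left mult.commute)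
  also have "\<dots> \<le> \<eta> * (hoffman_const p n M * (\<Sum>j<n. \<bar>\<Sum>i<p. u i * g i j\<bar>))"
    using u'(3) \<eta> by (rule mult_left_mono)
  finally show False using gap u'(2) by (simp add: mult_ac)
qed

lemma coord_multiplier:
  assumes bounded: "\<forall>y. feasible {..<p} n g h y \<longrightarrow> (\<forall>j<n. \<bar>y j\<bar> \<le> R)"
    and y: "feasible {..<p} n g h y" and jj: "jj < n" and s: "\<bar>s\<bar> = 1"
  shows "\<exists>u. (\<forall>i<p. 0 \<le> u i) \<and> (\<forall>j<n. (\<Sum>i<p. u i * g i j) = - of_bool (j = jj) * s)"
proof -
  define G where "G q j = (if q < p then g q j else of_bool (j = jj) * s)" for q j
  define H where "H q = (if q < p then h q else R + 1)" for q
  have "\<nexists>z. feasible {..<Suc p} n G H z"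
  proof
    assume "\<exists>z. feasible {..<Suc p} n G H z"
    then obtain z where z: "\<And>q. q < Suc p \<Longrightarrow> H q \<le> (\<Sum>j<n. G q j * z j)"
      by (auto simp: feasible_def)
    have "h i \<le> (\<Sum>j<n. g i j * z j)" if "i < p" for i
      using z[of i] that by (simp add: G_def H_def)
    then have "\<bar>z jj\<bar> \<le> R" using bounded jj by (simp add: feasible_def)
    moreover have "R + 1 \<le> s * z jj"
      using z[of p] jj by (simp add: G_def H_def mult.assoc Int_insert_right)
    ultimately show False using s by (auto simp: abs_if split: if_splits)
  qed
  then obtain U where U: "\<forall>q<Suc p. 0 \<le> U q" "\<forall>j<n. (\<Sum>q<Suc p. U q * G q j) = 0"
    "0 < (\<Sum>q<Suc p. U q * H q)"
    using farkas[of "{..<Suc p}" n G H] by auto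
  have comb: "(\<Sum>i<p. U i * g i j) = - U p * (of_bool (j = jj) * s)" if "j < n" for j
    using U(2)[rule_format, OF that] by (simp add: G_def)
  have "0 < U p"
  proof (rule ccontr)
    assume "\<not> 0 < U p"
    then have "U p = 0" using U(1) by (simp add: less_le)
    then have "0 < (\<Sum>i<p. U i * h i)" using U(3) by (simp add: H_def)
    moreover have "(\<Sum>i<p. U i * h i) \<le> 0"
      using feasible_multiplier_nonpos[OF y, of U] U(1) comb \<open>U p = 0\<close> by auto
    ultimately show False by simp
  qed
  then show ?thesis using U(1) comb
    by (intro exI[of _ "\<lambda>i. U i / U p"]) (auto simp flip: sum_divide_distrib)
qed

theorem feasible_coord_bound:
  assumes g: "\<forall>i<p. \<forall>j<n. g i j \<in> \<int> \<and> \<bar>g i j\<bar> \<le> M" and M: "1 \<le> M"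
    and bounded: "\<forall>y. feasible {..<p} n g h y \<longrightarrow> (\<forall>j<n. \<bar>y j\<bar> \<le> R)"
    and hb: "\<forall>i<p. \<bar>h i\<bar> \<le> hb" "0 \<le> hb"
    and y: "feasible {..<p} n g h y" and jj: "jj < n"
  shows "\<bar>y jj\<bar> \<le> hoffman_const p n M * hb"
proof -
  have "s * y jj \<le> hoffman_const p n M * hb" if s: "\<bar>s\<bar> = 1" for s
  proof -
    obtain u where u: "\<forall>i<p. 0 \<le> u i" "\<forall>j<n. (\<Sum>i<p. u i * g i j) = - of_bool (j = jj) * s"
      using coord_multiplier[OF bounded y jj s] by blast
    have "feasible {..<p} n g (\<lambda>_. 0) (\<lambda>_. 0)" by (simp add: feasible_def)
    from small_multiplier[OF g M u(1) this] obtain u' where u': "\<forall>i<p. 0 \<le> u' i"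
      "\<forall>j<n. (\<Sum>i<p. u' i * g i j) = (\<Sum>i<p. u i * g i j)"
      "(\<Sum>i<p. u' i) \<le> hoffman_const p n M * (\<Sum>j<n. \<bar>\<Sum>i<p. u i * g i j\<bar>)"
      by blast
    have "(\<Sum>j<n. \<bar>\<Sum>i<p. u i * g i j\<bar>) = 1" using u(2) s jj by (simp add: abs_mult Int_insert_right)
    have "s * y jj = - (\<Sum>j<n. (\<Sum>i<p. u' i * g i j) * y j)"
      using u'(2) u(2) jj by (simp add: mult.assoc sum_negf Int_insert_right)
    also have "\<dots> = - (\<Sum>i<p. u' i * (\<Sum>j<n. g i j * y j))" by (simp add: sum_rows_cols_swap)
    also have "\<dots> \<le> (\<Sum>i<p. u' i * hb)"
    proof -
      have "- (u' i * (\<Sum>j<n. g i j * y j)) \<le> u' i * hb" if "i < p" for i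
      proof -
        have "- (\<Sum>j<n. g i j * y j) \<le> hb" using y hb(1) that by (force simp: feasible_def)
        then show ?thesis using u'(1) that by (metis minus_mult_right mult_left_mono)
      qed
      then show ?thesis unfolding sum_negf[symmetric] by (intro sum_mono) auto
    qed
    also have "\<dots> \<le> hoffman_const p n M * hb"
      using u'(3) hb(2) \<open>(\<Sum>j<n. \<bar>\<Sum>i<p. u i * g i j\<bar>) = 1\<close>
      by (simp flip: sum_distrib_right add: mult_right_mono)
    finally show ?thesis .
  qed
  from this[of 1] this[of "-1"] show ?thesis by (simp add: abs_le_iff)
qed

section \<open>Approximately optimal solutions of linear programs\<close>

lemma feasible_scale:
  assumes "0 < c"
  shows "feasible I n (\<lambda>i j. c * g i j) (\<lambda>i. c * h i) y \<longleftrightarrow> feasible I n g h y"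
  using assms by (simp add: feasible_def mult.assoc flip: sum_distrib_left)

lemma approx_weak_duality:
  assumes ys: "feasible {..<l} n D \<beta> ys"
    and dual: "\<forall>j<n. \<bar>(\<Sum>i<l. D i j * zh i) - d j\<bar> \<le> \<epsilon>" "\<forall>i<l. - \<epsilon> \<le> zh i"
    and gap: "(\<Sum>j<n. d j * yh j) - (\<Sum>i<l. \<beta> i * zh i) \<le> \<epsilon>"
  shows "(\<Sum>j<n. d j * yh j)
           \<le> (\<Sum>j<n. d j * ys j) + \<epsilon> * (1 + (\<Sum>j<n. \<bar>ys j\<bar>) + (\<Sum>i<l. (\<Sum>j<n. D i j * ys j) - \<beta> i))"
proof -
  define s where "s i = (\<Sum>j<n. D i j * ys j) - \<beta> i" for i
  have "(\<Sum>i<l. \<beta> i * zh i) = (\<Sum>i<l. zh i * (\<Sum>j<n. D i j * ys j)) - (\<Sum>i<l. s i * zh i)"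
    by (simp add: s_def algebra_simps sum_subtractf)
  also have "\<dots> = (\<Sum>j<n. (\<Sum>i<l. zh i * D i j) * ys j) - (\<Sum>i<l. s i * zh i)"
    by (simp only: sum_rows_cols_swap)
  moreover have "(\<Sum>j<n. (\<Sum>i<l. zh i * D i j) * ys j) \<le> (\<Sum>j<n. d j * ys j + \<epsilon> * \<bar>ys j\<bar>)"
  proof (rule sum_mono)
    fix j assume "j \<in> {..<n}"
    then have "\<bar>(\<Sum>i<l. zh i * D i j) - d j\<bar> \<le> \<epsilon>" using dual(1) by (simp add: mult.commute)
    then have "((\<Sum>i<l. zh i * D i j) - d j) * ys j \<le> \<epsilon> * \<bar>ys j\<bar>"
      using abs_ge_self[of "((\<Sum>i<l. zh i * D i j) - d j) * ys j"]
        mult_right_mono[OF \<open>\<bar>(\<Sum>i<l. zh i * D i j) - d j\<bar> \<le> \<epsilon>\<close> abs_ge_zero[of "ys j"]]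
      by (simp add: abs_mult)
    then show "(\<Sum>i<l. zh i * D i j) * ys j \<le> d j * ys j + \<epsilon> * \<bar>ys j\<bar>" by (simp add: algebra_simps)
  qed
  moreover have "- (\<Sum>i<l. s i * zh i) \<le> (\<Sum>i<l. \<epsilon> * s i)"
  proof -
    have "- (s i * zh i) \<le> \<epsilon> * s i" if "i < l" for i
    proof -
      have "0 \<le> s i * (zh i + \<epsilon>)"
        using ys dual(2) that by (intro mult_nonneg_nonneg) (auto simp: feasible_def s_def)
      then show ?thesis by (simp add: algebra_simps)
    qed
    then show ?thesis unfolding sum_negf[symmetric] by (intro sum_mono) auto
  qed
  ultimately show ?thesis using gap
    by (simp add: s_def sum.distrib sum_distrib_left algebra_simps)
qed

lemma near_optimal_close_to_optimal:
  assumes D: "\<forall>i<l. \<forall>j<n. D i j \<in> \<int> \<and> \<bar>D i j\<bar> \<le> M" and d: "\<forall>j<n. d j \<in> \<int> \<and> \<bar>d j\<bar> \<le> M"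
    and M: "1 \<le> M" and ys: "feasible {..<l} n D \<beta> ys" and \<eta>: "0 \<le> \<eta>"
    and yh: "\<forall>i<l. \<beta> i - \<eta> \<le> (\<Sum>j<n. D i j * yh j)" "(\<Sum>j<n. d j * yh j) \<le> (\<Sum>j<n. d j * ys j) + \<eta>"
  shows "\<exists>y. feasible {..<l} n D \<beta> y \<and> (\<Sum>j<n. d j * y j) \<le> (\<Sum>j<n. d j * ys j)
             \<and> (\<Sum>j<n. \<bar>y j - yh j\<bar>) \<le> real n * hoffman_const (Suc l) n M * \<eta>"
proof -
  \<comment> \<open>add the objective row \<open>- d y \<ge> - d ys\<close> as row \<open>l\<close>\<close>
  define g where "g i j = (if i < l then D i j else - d j)" for i j
  define h where "h i = (if i < l then \<beta> i else - (\<Sum>j<n. d j * ys j))" for i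
  have g: "\<forall>i<Suc l. \<forall>j<n. g i j \<in> \<int> \<and> \<bar>g i j\<bar> \<le> M"
    using D d by (simp add: g_def less_Suc_eq)
  have "feasible {..<Suc l} n g h ys"
    using ys by (auto simp: feasible_def g_def h_def less_Suc_eq sum_negf)
  moreover have "\<forall>i<Suc l. h i - \<eta> \<le> (\<Sum>j<n. g i j * yh j)"
    using yh by (auto simp: g_def h_def less_Suc_eq sum_negf)
  ultimately obtain y where y: "feasible {..<Suc l} n g h y"
    "\<forall>j<n. \<bar>y j - yh j\<bar> \<le> hoffman_const (Suc l) n M * \<eta>"
    using hoffman_bound[OF g M _ \<eta>] by blast
  have row: "h i \<le> (\<Sum>j<n. g i j * y j)" if "i < Suc l" for i
    using y(1) that by (simp add: feasible_def)
  have "feasible {..<l} n D \<beta> y"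
  proof (unfold feasible_def, intro ballI)
    fix i assume "i \<in> {..<l}"
    then show "\<beta> i \<le> (\<Sum>j<n. D i j * y j)" using row[of i] by (simp add: g_def h_def)
  qed
  moreover have "(\<Sum>j<n. d j * y j) \<le> (\<Sum>j<n. d j * ys j)"
    using row[of l] by (simp add: g_def h_def sum_negf)
  moreover have "(\<Sum>j<n. \<bar>y j - yh j\<bar>) \<le> real n * (hoffman_const (Suc l) n M * \<eta>)"
    using sum_bounded_above[of "{..<n}" "\<lambda>j. \<bar>y j - yh j\<bar>"] y(2) by simp
  ultimately show ?thesis by (auto simp: mult.assoc)
qed

section \<open>Encoding sizes\<close>

lemma size_int_bound: "real_of_int \<bar>z\<bar> + 1 \<le> 2 ^ size_int z"
proof -
  define t where "t = log 2 (real_of_int \<bar>z\<bar> + 1)"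
  have "0 \<le> t" by (simp add: t_def)
  have size: "size_int z = 1 + nat \<lceil>t\<rceil>" by (simp add: size_int_def t_def)
  have "real_of_int \<bar>z\<bar> + 1 = 2 powr t" by (simp add: t_def add_pos_nonneg)
  also have "\<dots> \<le> 2 powr real (nat \<lceil>t\<rceil>)"
    by (rule powr_mono) (use \<open>0 \<le> t\<close> in \<open>auto intro: le_of_int_ceiling\<close>)
  also have "\<dots> = 2 ^ nat \<lceil>t\<rceil>" by (simp add: powr_realpow)
  also have "\<dots> \<le> 2 ^ size_int z" using size by simp
  finally show ?thesis .
qed

lemma size_int_le:
  assumes "\<bar>z\<bar> < 2 ^ k"
  shows "size_int z \<le> k + 1"
proof -
  have "\<bar>z\<bar> + 1 \<le> 2 ^ k" using assms by linarith
  then have "real_of_int (\<bar>z\<bar> + 1) \<le> real_of_int (2 ^ k)" by (simp only: of_int_le_iff)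
  then have "real_of_int \<bar>z\<bar> + 1 \<le> 2 ^ k" by simp
  then have "log 2 (real_of_int \<bar>z\<bar> + 1) \<le> k"
    by (simp add: log_le_iff powr_realpow add_pos_nonneg)
  then show ?thesis by (simp add: size_int_def ceiling_le_iff nat_le_iff)
qed

lemma size_rat_two_power: "size_rat ((2::rat) ^ N) \<le> N + 4"
proof -
  have "quotient_of ((2::rat) ^ N) = (2 ^ N, 1)"
    using quotient_of_rat_of_int[of "2 ^ N"] by simp
  moreover have "size_int (2 ^ N) \<le> N + 2" by (rule order_trans[OF size_int_le[of _ "N + 1"]]) auto
  moreover have "size_int 1 \<le> 2" using size_int_le[of 1 1] by simp
  ultimately show ?thesis by (simp add: size_rat_def)
qed

lemma of_rat_le_size:
  "\<bar>real_of_rat q\<bar> \<le> 2 ^ size_rat q" "real_of_int (snd (quotient_of q)) \<le> 2 ^ size_rat q"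
proof -
  obtain a b where q: "quotient_of q = (a, b)" by (cases "quotient_of q")
  have b: "0 < b" using quotient_of_denom_pos[OF q] .
  have size: "size_rat q = size_int a + size_int b" by (simp add: size_rat_def q)
  have "\<bar>real_of_rat q\<bar> = real_of_int \<bar>a\<bar> / real_of_int b"
    using quotient_of_div[OF q] b by (simp add: of_rat_divide abs_divide)
  also have "\<dots> \<le> real_of_int \<bar>a\<bar> / 1" using b by (intro divide_left_mono) auto
  also have "\<dots> \<le> 2 ^ size_int a" using size_int_bound[of a] by linarith
  also have "\<dots> \<le> 2 ^ size_rat q" by (intro power_increasing) (auto simp: size)
  finally show "\<bar>real_of_rat q\<bar> \<le> 2 ^ size_rat q" .
  have "real_of_int b + 1 \<le> 2 ^ size_int b" using size_int_bound[of b] b by simp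
  then have "real_of_int b \<le> 2 ^ size_int b" by linarith
  also have "\<dots> \<le> 2 ^ size_rat q" by (intro power_increasing) (auto simp: size)
  finally show "real_of_int (snd (quotient_of q)) \<le> 2 ^ size_rat q" by (simp add: q)
qed

lemma common_denominator:
  assumes "finite I"
  shows "\<exists>L::int. 0 < L \<and> real_of_int L \<le> 2 ^ (\<Sum>i\<in>I. size_rat (f i))
           \<and> (\<forall>i\<in>I. real_of_int L * real_of_rat (f i) \<in> \<int>)"
  using assms
proof (induction I rule: finite_induct)
  case (insert x I)
  then obtain L where L: "0 < L" "real_of_int L \<le> 2 ^ (\<Sum>i\<in>I. size_rat (f i))"
    "\<forall>i\<in>I. real_of_int L * real_of_rat (f i) \<in> \<int>"
    by blast
  obtain a b where q: "quotient_of (f x) = (a, b)" by (cases "quotient_of (f x)")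
  have b: "0 < b" using quotient_of_denom_pos[OF q] .
  have "real_of_int (b * L) * real_of_rat (f x) = real_of_int (L * a)"
    using quotient_of_div[OF q] b by (simp add: of_rat_divide)
  then have "real_of_int (b * L) * real_of_rat (f x) \<in> \<int>" by (metis Ints_of_int)
  moreover have "real_of_int (b * L) * real_of_rat (f i) \<in> \<int>" if "i \<in> I" for i
    using L(3) that by (simp add: mult.assoc)
  moreover have "real_of_int (b * L) \<le> 2 ^ size_rat (f x) * 2 ^ (\<Sum>i\<in>I. size_rat (f i))"
    using of_rat_le_size(2)[of "f x"] q L(1,2) b by (simp add: mult_mono)
  ultimately show ?case
    using insert.hyps L(1) b by (intro exI[of _ "b * L"]) (auto simp: power_add)
qed (auto intro!: exI[of _ 1])

lemma size_rat_le_size_mat: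
  assumes "i < r" "j < c"
  shows "size_rat (M i j) \<le> size_mat r c M"
proof -
  have "size_rat (M i j) \<le> (\<Sum>j<c. size_rat (M i j))" using assms by (intro member_le_sum) auto
  also have "\<dots> \<le> (\<Sum>i<r. \<Sum>j<c. size_rat (M i j))" using assms by (intro member_le_sum) auto
  finally show ?thesis by (simp add: size_mat_def)
qed

lemma size_rat_le_size_vec:
  assumes "j < n"
  shows "size_rat (v j) \<le> size_vec n v"
proof -
  have "size_rat (v j) \<le> (\<Sum>j<n. size_rat (v j))" using assms by (intro member_le_sum) auto
  then show ?thesis by (simp add: size_vec_def)
qed

section \<open>The bilevel program\<close>

lemma compact_imp_snd_coord_bounded:
  fixes S :: "((nat \<Rightarrow> real) \<times> (nat \<Rightarrow> real)) set"
  assumes "compact S"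
  shows "\<exists>R. \<forall>p\<in>S. \<forall>j<n. \<bar>snd p j\<bar> \<le> R"
proof -
  have "compact ((\<lambda>p. snd p j) ` S)" for j
    by (intro compact_continuous_image[OF _ assms]
        continuous_on_product_then_coordinatewise[OF continuous_on_snd[OF continuous_on_id]])
  then have "bounded (\<Union>j<n. (\<lambda>p. snd p j) ` S)" by (intro compact_imp_bounded compact_UN) auto
  then obtain R where "\<forall>z\<in>(\<Union>j<n. (\<lambda>p. snd p j) ` S). norm z \<le> R" unfolding bounded_iff by blast
  then show ?thesis by (intro exI[of _ R]) auto
qed

lemma compact_slice_attains_min:
  fixes S :: "((nat \<Rightarrow> real) \<times> (nat \<Rightarrow> real)) set"
  assumes "compact S" and "(x, y1) \<in> S"
  shows "\<exists>y. (x, y) \<in> S \<and> (\<forall>y'. (x, y') \<in> S \<longrightarrow> (\<Sum>j<n. c j * y j) \<le> (\<Sum>j<n. c j * y' j))"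
proof -
  have "closed {p::(nat \<Rightarrow> real) \<times> (nat \<Rightarrow> real). fst p j = x j}" for j
    by (intro closed_Collect_eq continuous_on_const
        continuous_on_product_then_coordinatewise[OF continuous_on_fst[OF continuous_on_id]])
  moreover have "{p. fst p = x} = (\<Inter>j. {p::(nat \<Rightarrow> real) \<times> (nat \<Rightarrow> real). fst p j = x j})"
    by (auto simp: fun_eq_iff)
  ultimately have "closed {p::(nat \<Rightarrow> real) \<times> (nat \<Rightarrow> real). fst p = x}" by (simp add: closed_INT)
  then have "compact (snd ` (S \<inter> {p. fst p = x}))"
    using assms(1) by (intro compact_continuous_image[OF continuous_on_snd[OF continuous_on_id]]
        compact_Int_closed) auto
  moreover have "snd ` (S \<inter> {p. fst p = x}) = {y. (x, y) \<in> S}" by force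
  moreover have "continuous_on {y. (x, y) \<in> S} (\<lambda>y. \<Sum>j<n. c j * y j)"
    by (intro continuous_on_sum continuous_on_mult continuous_on_const
        continuous_on_product_then_coordinatewise[OF continuous_on_id])
  ultimately show ?thesis
    using continuous_attains_inf[of "{y. (x, y) \<in> S}" "\<lambda>y. \<Sum>j<n. c j * y j"] assms(2) by auto
qed

definition trunc_vec :: "nat \<Rightarrow> (nat \<Rightarrow> real) \<Rightarrow> nat \<Rightarrow> real" where
  "trunc_vec n v j = (if j < n then v j else 0)"

lemma trunc_vec_in_vec_set: "trunc_vec n v \<in> Defs.vec_set n"
  by (simp add: trunc_vec_def Defs.vec_set_def)

lemma sum_trunc_vec [simp]: "(\<Sum>j<n. c j * trunc_vec n v j) = (\<Sum>j<n. c j * v j)"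
  by (simp add: trunc_vec_def)

lemma mat_vec_trunc_vec [simp]: "mat_vec M n (trunc_vec n v) = mat_vec M n v"
  by (simp add: mat_vec_def fun_eq_iff)

lemma ul_feasible_iff:
  "ul_feasible m nx A a x \<longleftrightarrow> feasible {..<m} nx (\<lambda>i j. real_of_rat (A i j)) (\<lambda>i. real_of_rat (a i)) x"
  by (auto simp: ul_feasible_def feasible_def mat_vec_def)

lemma ll_feasible_iff:
  "ll_feasible l nx ny C D b x y \<longleftrightarrow>
     feasible {..<l} ny (\<lambda>i j. real_of_rat (D i j)) (\<lambda>i. real_of_rat (b i) - mat_vec C nx x i) y"
  by (auto simp: ll_feasible_def feasible_def mat_vec_def)

lemma common_denominator_mat:
  fixes r c :: nat and M :: "nat \<Rightarrow> nat \<Rightarrow> rat"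
  shows "\<exists>L::int. 0 < L \<and> real_of_int L \<le> 2 ^ (\<Sum>i<r. \<Sum>j<c. size_rat (M i j))
     \<and> (\<forall>i<r. \<forall>j<c. real_of_int L * real_of_rat (M i j) \<in> \<int>)"
proof -
  have "\<exists>L::int. 0 < L \<and> real_of_int L \<le> 2 ^ (\<Sum>p\<in>{..<r} \<times> {..<c}. size_rat (M (fst p) (snd p)))
      \<and> (\<forall>p\<in>{..<r} \<times> {..<c}. real_of_int L * real_of_rat (M (fst p) (snd p)) \<in> \<int>)"
    by (rule common_denominator) simp
  moreover have "(\<Sum>p\<in>{..<r} \<times> {..<c}. size_rat (M (fst p) (snd p))) = (\<Sum>i<r. \<Sum>j<c. size_rat (M i j))"
    by (simp add: sum.cartesian_product split_def)
  ultimately show ?thesis by auto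
qed

locale bilevel_lp =
  fixes m nx l ny :: nat and A C D :: "nat \<Rightarrow> nat \<Rightarrow> rat" and a b d :: "nat \<Rightarrow> rat"
  assumes compact_feasible_pairs:
      "compact {(x, y). x \<in> Defs.vec_set nx \<and> y \<in> Defs.vec_set ny \<and>
                        ul_feasible m nx A a x \<and> ll_feasible l nx ny C D b x y}"
    and lower_level_feasible: "\<forall>x. ul_feasible m nx A a x \<longrightarrow> (\<exists>y. ll_feasible l nx ny C D b x y)"
    and upper_level_bounded: "\<exists>M. \<forall>x. ul_feasible m nx A a x \<longrightarrow> (\<forall>j<nx. \<bar>x j\<bar> \<le> M)"
begin

abbreviation feasible_pairs :: "((nat \<Rightarrow> real) \<times> (nat \<Rightarrow> real)) set" where
  "feasible_pairs \<equiv> {(x, y). x \<in> Defs.vec_set nx \<and> y \<in> Defs.vec_set ny \<and>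
                        ul_feasible m nx A a x \<and> ll_feasible l nx ny C D b x y}"

abbreviation rhs :: "(nat \<Rightarrow> real) \<Rightarrow> nat \<Rightarrow> real" where
  "rhs x i \<equiv> real_of_rat (b i) - mat_vec C nx x i"

definition data_size :: nat where
  "data_size = size_mat m nx A + size_vec m a + size_mat l nx C + size_mat l ny D
     + size_vec l b + size_vec ny d + 1"

(* Every entry, dimension and common denominator is at most W, every Hoffman constant that
   occurs is at most \<Omega>, and all bounds below are powers of \<Omega>. *)
definition W :: real where "W = 2 ^ data_size"

definition \<Omega> :: real where "\<Omega> = W ^ (6 * data_size + 1)"

lemma dims_le_data_size: "m \<le> data_size" "l < data_size" "ny \<le> data_size" "nx \<le> data_size"
proof -
  show "m \<le> data_size" "l < data_size" "ny \<le> data_size"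
    by (simp_all add: data_size_def size_vec_def)
  show "nx \<le> data_size"
  proof (cases "nx = 0")
    case False
    \<comment> \<open>without constraints the upper level would be unbounded\<close>
    have "m \<noteq> 0"
    proof
      assume "m = 0"
      obtain M where M: "\<forall>x. ul_feasible m nx A a x \<longrightarrow> (\<forall>j<nx. \<bar>x j\<bar> \<le> M)"
        using upper_level_bounded by blast
      have "ul_feasible m nx A a (\<lambda>_. \<bar>M\<bar> + 1)" using \<open>m = 0\<close> by (simp add: ul_feasible_def)
      then have "\<bar>\<bar>M\<bar> + 1\<bar> \<le> M" using M False by blast
      then show False by linarith
    qed
    then have "nx \<le> m * nx" by simp
    also have "\<dots> \<le> data_size" by (simp add: data_size_def size_mat_def)
    finally show ?thesis .
  qed simp
qed

lemma W_ge_2: "2 \<le> W"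
  using power_increasing[of 1 data_size "2::real"] by (simp add: W_def data_size_def)

lemma W_le_\<Omega>: "W \<le> \<Omega>"
  using power_increasing[of 1 "6 * data_size + 1" W] W_ge_2 by (simp add: \<Omega>_def)

lemma \<Omega>_ge_2: "2 \<le> \<Omega>"
  using W_ge_2 W_le_\<Omega> by simp

lemma Suc_le_W: "k \<le> data_size \<Longrightarrow> real (Suc k) \<le> W"
  unfolding W_def using less_exp[of k] power_increasing[of k data_size "2::real"]
  by (metis Suc_leI numeral_power_le_of_nat_cancel_iff of_nat_le_iff one_le_numeral order_trans
      of_nat_numeral of_nat_power)

lemma abs_of_rat_le_W:
  assumes "size_rat q \<le> data_size"
  shows "\<bar>real_of_rat q\<bar> \<le> W"
proof -
  have "(2::real) ^ size_rat q \<le> 2 ^ data_size" using assms by (intro power_increasing) auto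
  then show ?thesis unfolding W_def using of_rat_le_size(1)[of q] by linarith
qed

lemma \<Omega>_pow_mono: "i \<le> k \<Longrightarrow> \<Omega> ^ i \<le> \<Omega> ^ k"
  using \<Omega>_ge_2 by (intro power_increasing) auto

lemma sum_le_\<Omega>_pow:
  assumes "n \<le> data_size" and "\<forall>j<n. f j \<le> \<Omega> ^ k"
  shows "(\<Sum>j<n. f j) \<le> \<Omega> ^ (k + 1)"
proof -
  have "(\<Sum>j<n. f j) \<le> real n * \<Omega> ^ k" using assms(2) sum_bounded_above[of "{..<n}" f] by simp
  also have "\<dots> \<le> \<Omega> * \<Omega> ^ k"
    using Suc_le_W[OF assms(1)] W_le_\<Omega> \<Omega>_ge_2 by (intro mult_right_mono) auto
  finally show ?thesis by simp
qed

lemma double_le_\<Omega>_pow: "2 * \<Omega> ^ k \<le> \<Omega> ^ (k + 1)"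
  using \<Omega>_ge_2 by (simp add: mult_right_mono)

lemma mult_le_\<Omega>_pow: "x \<le> \<Omega> ^ i \<Longrightarrow> 0 \<le> y \<Longrightarrow> y \<le> \<Omega> ^ k \<Longrightarrow> x * y \<le> \<Omega> ^ (i + k)"
  using \<Omega>_ge_2 by (simp add: power_add mult_mono)

lemma abs_of_rat_le_\<Omega>: "size_rat q \<le> data_size \<Longrightarrow> \<bar>real_of_rat q\<bar> \<le> \<Omega>"
  using abs_of_rat_le_W W_le_\<Omega> by fastforce

lemma hoffman_const_le_\<Omega>:
  assumes "p \<le> data_size" "n \<le> data_size"
  shows "hoffman_const p n (W\<^sup>2) \<le> \<Omega>"
proof -
  have p: "real p \<le> W" using Suc_le_W[OF assms(1)] by simp
  have "fact p \<le> real p ^ p" using fact_le_power[of p] by simp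
  also have "\<dots> \<le> W ^ p" using p by (intro power_mono) auto
  finally have fact: "fact p \<le> W ^ p" .
  have "real (Suc n) * (W\<^sup>2)\<^sup>2 \<le> W * W ^ 4"
    using Suc_le_W[OF assms(2)] W_ge_2 by (simp add: mult_right_mono flip: power_mult)
  also have "W * W ^ 4 = W ^ 5" by (subst power_Suc[symmetric]) simp
  finally have "hoffman_const p n (W\<^sup>2) \<le> W * W ^ p * (W ^ 5) ^ p"
    unfolding hoffman_const_def using p fact W_ge_2 by (intro mult_mono power_mono) auto
  also have "\<dots> = W ^ (1 + p + 5 * p)" by (simp only: power_add power_mult power_one_right)
  also have "\<dots> \<le> \<Omega>" unfolding \<Omega>_def using assms(1) W_ge_2 by (intro power_increasing) auto
  finally show ?thesis .
qed

lemma scaling_factor: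
  obtains L :: real where "1 \<le> L" "L \<le> W"
    "\<forall>i<m. \<forall>j<nx. L * real_of_rat (A i j) \<in> \<int>"
    "\<forall>i<l. \<forall>j<ny. L * real_of_rat (D i j) \<in> \<int>" "\<forall>j<ny. L * real_of_rat (d j) \<in> \<int>"
    "\<And>q. size_rat q \<le> data_size \<Longrightarrow> \<bar>L * real_of_rat q\<bar> \<le> W\<^sup>2"
proof -
  obtain LA LD Ld :: int where LA: "0 < LA" "real_of_int LA \<le> 2 ^ (\<Sum>i<m. \<Sum>j<nx. size_rat (A i j))"
      "\<forall>i<m. \<forall>j<nx. real_of_int LA * real_of_rat (A i j) \<in> \<int>"
    and LD: "0 < LD" "real_of_int LD \<le> 2 ^ (\<Sum>i<l. \<Sum>j<ny. size_rat (D i j))"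
      "\<forall>i<l. \<forall>j<ny. real_of_int LD * real_of_rat (D i j) \<in> \<int>"
    and Ld: "0 < Ld" "real_of_int Ld \<le> 2 ^ (\<Sum>j<ny. size_rat (d j))"
      "\<forall>j<ny. real_of_int Ld * real_of_rat (d j) \<in> \<int>"
    using common_denominator_mat[where r = m and c = nx and M = A]
      common_denominator_mat[where r = l and c = ny and M = D]
      common_denominator_mat[where r = 1 and c = ny and M = "\<lambda>_ j. d j"] by auto
  define L where "L = real_of_int (LA * LD * Ld)"
  have "L \<le> 2 ^ (\<Sum>i<m. \<Sum>j<nx. size_rat (A i j)) * 2 ^ (\<Sum>i<l. \<Sum>j<ny. size_rat (D i j))
      * 2 ^ (\<Sum>j<ny. size_rat (d j))"
    unfolding L_def using LA LD Ld by (simp only: of_int_mult) (intro mult_mono, auto)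
  also have "\<dots> \<le> W"
    unfolding W_def power_add[symmetric]
    by (intro power_increasing) (auto simp: data_size_def size_mat_def size_vec_def)
  finally have "L \<le> W" .
  moreover have "1 \<le> L"
  proof -
    have "0 < LA * LD * Ld" using LA(1) LD(1) Ld(1) by simp
    then show ?thesis unfolding L_def by (metis int_one_le_iff_zero_less of_int_1_le_iff)
  qed
  moreover have "L * x \<in> \<int>" if "real_of_int K * x \<in> \<int>" "K \<in> {LA, LD, Ld}" for K x
  proof -
    have "L * x = real_of_int (LA * LD * Ld div K) * (real_of_int K * x)"
      using that(2) LA(1) LD(1) Ld(1) by (auto simp: L_def)
    then show ?thesis by (simp only:) (intro Ints_mult Ints_of_int that(1))
  qed
  moreover have "\<bar>L * real_of_rat q\<bar> \<le> W\<^sup>2" if "size_rat q \<le> data_size" for q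
    using \<open>L \<le> W\<close> \<open>1 \<le> L\<close> abs_of_rat_le_W[OF that]
    by (simp add: abs_mult power2_eq_square mult_mono)
  ultimately show ?thesis using that LA(3) LD(3) Ld(3) by blast
qed

lemma entry_size_le_data_size:
  "i < m \<Longrightarrow> j < nx \<Longrightarrow> size_rat (A i j) \<le> data_size" "i < m \<Longrightarrow> size_rat (a i) \<le> data_size"
  "i < l \<Longrightarrow> j < nx \<Longrightarrow> size_rat (C i j) \<le> data_size"
  "i < l \<Longrightarrow> j < ny \<Longrightarrow> size_rat (D i j) \<le> data_size"
  "i < l \<Longrightarrow> size_rat (b i) \<le> data_size" "j < ny \<Longrightarrow> size_rat (d j) \<le> data_size"
  using size_rat_le_size_mat[of i m j nx A] size_rat_le_size_vec[of i m a]
    size_rat_le_size_mat[of i l j nx C] size_rat_le_size_mat[of i l j ny D]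
    size_rat_le_size_vec[of i l b] size_rat_le_size_vec[of j ny d]
  by (auto simp: data_size_def)

lemma W_sq_ge_1: "1 \<le> W\<^sup>2"
  using W_ge_2 by (simp add: one_le_power)

lemma trunc_in_feasible_pairs:
  assumes "ul_feasible m nx A a x" "ll_feasible l nx ny C D b x y"
  shows "(trunc_vec nx x, trunc_vec ny y) \<in> feasible_pairs"
  using assms by (simp add: trunc_vec_in_vec_set ul_feasible_def ll_feasible_def)

lemma ul_coord_bound:
  assumes x: "ul_feasible m nx A a x" and j: "j < nx"
  shows "\<bar>x j\<bar> \<le> \<Omega> ^ 3"
proof -
  obtain L where L: "1 \<le> L" "\<forall>i<m. \<forall>j<nx. L * real_of_rat (A i j) \<in> \<int>"
    "\<And>q. size_rat q \<le> data_size \<Longrightarrow> \<bar>L * real_of_rat q\<bar> \<le> W\<^sup>2"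
    using scaling_factor by metis
  obtain M where M: "\<forall>x. ul_feasible m nx A a x \<longrightarrow> (\<forall>j<nx. \<bar>x j\<bar> \<le> M)"
    using upper_level_bounded by blast
  have feasible: "feasible {..<m} nx (\<lambda>i j. L * real_of_rat (A i j)) (\<lambda>i. L * real_of_rat (a i)) y
      \<longleftrightarrow> ul_feasible m nx A a y" for y
    using L(1) by (simp add: ul_feasible_iff feasible_scale)
  have g: "\<forall>i<m. \<forall>j<nx. L * real_of_rat (A i j) \<in> \<int> \<and> \<bar>L * real_of_rat (A i j)\<bar> \<le> W\<^sup>2"
    using L(2,3) entry_size_le_data_size(1) by blast
  have bounded: "\<forall>y. feasible {..<m} nx (\<lambda>i j. L * real_of_rat (A i j)) (\<lambda>i. L * real_of_rat (a i)) y
      \<longrightarrow> (\<forall>j<nx. \<bar>y j\<bar> \<le> M)"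
    using M feasible by blast
  have "\<forall>i<m. \<bar>L * real_of_rat (a i)\<bar> \<le> W\<^sup>2"
    using L(3) entry_size_le_data_size(2) by blast
  from feasible_coord_bound[OF g W_sq_ge_1 bounded this _ _ j] x feasible
  have "\<bar>x j\<bar> \<le> hoffman_const m nx (W\<^sup>2) * W\<^sup>2" by simp
  also have "\<dots> \<le> \<Omega> * \<Omega>\<^sup>2"
    using hoffman_const_le_\<Omega> dims_le_data_size W_le_\<Omega> W_ge_2
    by (intro mult_mono power_mono) auto
  finally show ?thesis by (simp add: power2_eq_square power3_eq_cube)
qed

lemma rhs_bound:
  assumes x: "ul_feasible m nx A a x" and i: "i < l"
  shows "\<bar>rhs x i\<bar> \<le> \<Omega> ^ 6"
proof -
  have "\<bar>mat_vec C nx x i\<bar> \<le> (\<Sum>j<nx. \<bar>real_of_rat (C i j) * x j\<bar>)"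
    unfolding mat_vec_def by (rule sum_abs)
  also have "\<dots> \<le> \<Omega> ^ 5"
  proof (rule sum_le_\<Omega>_pow[OF dims_le_data_size(4), where k = 4, simplified], intro allI impI)
    fix j assume "j < nx"
    then show "\<bar>real_of_rat (C i j) * x j\<bar> \<le> \<Omega> ^ 4"
      using mult_le_\<Omega>_pow[where i = 1 and k = 3] abs_of_rat_le_\<Omega>[OF entry_size_le_data_size(3)[OF i]]
        ul_coord_bound[OF x] by (simp add: abs_mult)
  qed
  moreover have "\<bar>real_of_rat (b i)\<bar> \<le> \<Omega> ^ 5"
    using abs_of_rat_le_\<Omega>[OF entry_size_le_data_size(5)[OF i]] \<Omega>_pow_mono[of 1 5] by simp
  moreover have "\<bar>rhs x i\<bar> \<le> \<bar>real_of_rat (b i)\<bar> + \<bar>mat_vec C nx x i\<bar>" by (rule abs_triangle_ineq4)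
  ultimately have "\<bar>rhs x i\<bar> \<le> 2 * \<Omega> ^ 5" by linarith
  also have "\<dots> \<le> \<Omega> ^ 6" using double_le_\<Omega>_pow[of 5] by simp
  finally show ?thesis .
qed

lemma ll_coord_bound:
  assumes x: "ul_feasible m nx A a x" and y: "ll_feasible l nx ny C D b x y" and j: "j < ny"
  shows "\<bar>y j\<bar> \<le> \<Omega> ^ 8"
proof -
  obtain L where L: "1 \<le> L" "L \<le> W" "\<forall>i<l. \<forall>j<ny. L * real_of_rat (D i j) \<in> \<int>"
    "\<And>q. size_rat q \<le> data_size \<Longrightarrow> \<bar>L * real_of_rat q\<bar> \<le> W\<^sup>2"
    using scaling_factor by metis
  obtain R where R: "\<forall>p\<in>feasible_pairs. \<forall>j<ny. \<bar>snd p j\<bar> \<le> R"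
    using compact_imp_snd_coord_bounded[OF compact_feasible_pairs] by blast
  have feasible: "feasible {..<l} ny (\<lambda>i j. L * real_of_rat (D i j)) (\<lambda>i. L * rhs x i) y'
      \<longleftrightarrow> ll_feasible l nx ny C D b x y'" for y'
    using L(1) by (simp add: ll_feasible_iff feasible_scale)
  have g: "\<forall>i<l. \<forall>j<ny. L * real_of_rat (D i j) \<in> \<int> \<and> \<bar>L * real_of_rat (D i j)\<bar> \<le> W\<^sup>2"
    using L(3,4) entry_size_le_data_size(4) by blast
  have "\<bar>y' j\<bar> \<le> R" if "ll_feasible l nx ny C D b x y'" "j < ny" for y' j
    using R trunc_in_feasible_pairs[OF x that(1)] that(2) by (fastforce simp: trunc_vec_def)
  then have bounded: "\<forall>y'. feasible {..<l} ny (\<lambda>i j. L * real_of_rat (D i j)) (\<lambda>i. L * rhs x i) y'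
      \<longrightarrow> (\<forall>j<ny. \<bar>y' j\<bar> \<le> R)"
    using feasible by blast
  have "\<bar>L * rhs x i\<bar> \<le> \<Omega> ^ 7" if "i < l" for i
    using mult_le_\<Omega>_pow[where i = 1 and k = 6] rhs_bound[OF x that] L(1,2) W_le_\<Omega>
    by (simp add: abs_mult)
  with feasible_coord_bound[OF g W_sq_ge_1 bounded] y feasible j \<Omega>_ge_2
  have "\<bar>y j\<bar> \<le> hoffman_const l ny (W\<^sup>2) * \<Omega> ^ 7" by simp
  also have "\<dots> \<le> \<Omega> ^ 8"
    using mult_le_\<Omega>_pow[where i = 1 and k = 7] hoffman_const_le_\<Omega> dims_le_data_size \<Omega>_ge_2
    by simp
  finally show ?thesis .
qed

lemma ll_optimal_exists:
  assumes x: "ul_feasible m nx A a x"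
  obtains y where "ll_optimal l nx ny C D b d x y"
proof -
  obtain y1 where "ll_feasible l nx ny C D b x y1" using lower_level_feasible x by blast
  from compact_slice_attains_min[OF compact_feasible_pairs trunc_in_feasible_pairs[OF x this],
      where n = ny and c = "\<lambda>j. real_of_rat (d j)"]
  obtain y where y: "(trunc_vec nx x, y) \<in> feasible_pairs"
    and min: "\<forall>y'. (trunc_vec nx x, y') \<in> feasible_pairs \<longrightarrow>
      (\<Sum>j<ny. real_of_rat (d j) * y j) \<le> (\<Sum>j<ny. real_of_rat (d j) * y' j)"
    by blast
  have "ll_feasible l nx ny C D b x y" using y by (simp add: ll_feasible_def)
  moreover have "(\<Sum>j<ny. real_of_rat (d j) * y j) \<le> (\<Sum>j<ny. real_of_rat (d j) * y' j)"
    if "ll_feasible l nx ny C D b x y'" for y'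
    using min[rule_format, OF trunc_in_feasible_pairs[OF x that]] by simp
  ultimately show ?thesis using that by (auto simp: ll_optimal_def)
qed

lemma slack_bound:
  assumes x: "ul_feasible m nx A a x" and y: "ll_feasible l nx ny C D b x y"
  shows "1 + (\<Sum>j<ny. \<bar>y j\<bar>) + (\<Sum>i<l. (\<Sum>j<ny. real_of_rat (D i j) * y j) - rhs x i) \<le> \<Omega> ^ 13"
proof -
  have "(\<Sum>j<ny. \<bar>y j\<bar>) \<le> \<Omega> ^ 9"
    using sum_le_\<Omega>_pow[OF dims_le_data_size(3), where k = 8] ll_coord_bound[OF x y] by simp
  moreover have "(\<Sum>i<l. (\<Sum>j<ny. real_of_rat (D i j) * y j) - rhs x i) \<le> \<Omega> ^ 12"
  proof (rule sum_le_\<Omega>_pow[where k = 11, simplified], use dims_le_data_size(2) in simp, intro allI impI)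
    fix i assume i: "i < l"
    have "\<bar>real_of_rat (D i j) * y j\<bar> \<le> \<Omega> ^ 9" if "j < ny" for j
      using mult_le_\<Omega>_pow[where i = 1 and k = 8] ll_coord_bound[OF x y that]
        abs_of_rat_le_\<Omega>[OF entry_size_le_data_size(4)[OF i that]] by (simp add: abs_mult)
    then have "(\<Sum>j<ny. \<bar>real_of_rat (D i j) * y j\<bar>) \<le> \<Omega> ^ 10"
      using sum_le_\<Omega>_pow[OF dims_le_data_size(3), where k = 9] by simp
    moreover have "\<Omega> ^ 6 \<le> \<Omega> ^ 10" by (rule \<Omega>_pow_mono) simp
    ultimately have "(\<Sum>j<ny. real_of_rat (D i j) * y j) - rhs x i \<le> 2 * \<Omega> ^ 10"
      using rhs_bound[OF x i] sum_abs[of "\<lambda>j. real_of_rat (D i j) * y j" "{..<ny}"] by linarith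
    then show "(\<Sum>j<ny. real_of_rat (D i j) * y j) - rhs x i \<le> \<Omega> ^ 11"
      using double_le_\<Omega>_pow[of 10] by simp
  qed
  moreover have "1 + \<Omega> ^ 9 + \<Omega> ^ 12 \<le> \<Omega> ^ 13"
  proof -
    have "1 + \<Omega> ^ 9 \<le> 2 * \<Omega> ^ 9" using \<Omega>_ge_2 by (simp add: one_le_power)
    also have "\<dots> \<le> \<Omega> ^ 12" using double_le_\<Omega>_pow[of 9] \<Omega>_pow_mono[of 10 12] by simp
    finally show ?thesis using double_le_\<Omega>_pow[of 12] by simp
  qed
  ultimately show ?thesis by linarith
qed

definition \<kappa> :: rat where "\<kappa> = 2 ^ (data_size * (6 * data_size + 1) * 16)"

lemma of_rat_\<kappa>: "real_of_rat \<kappa> = \<Omega> ^ 16"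
  unfolding \<kappa>_def \<Omega>_def W_def power_mult by (simp add: of_rat_power of_rat_mult)

lemma \<kappa>_pos: "0 < \<kappa>"
  by (simp add: \<kappa>_def)

lemma size_rat_\<kappa>: "size_rat \<kappa> \<le> 116 * data_size\<^sup>2"
proof -
  have "1 \<le> data_size" by (simp add: data_size_def)
  then have "data_size \<le> data_size * data_size" "1 \<le> data_size * data_size" by simp_all
  moreover have "size_rat \<kappa> \<le> data_size * (6 * data_size + 1) * 16 + 4"
    unfolding \<kappa>_def by (rule size_rat_two_power)
  moreover have "data_size * (6 * data_size + 1) * 16 = 96 * (data_size * data_size) + 16 * data_size"
    by (simp add: algebra_simps)
  ultimately show ?thesis unfolding power2_eq_square by linarith
qed

lemma near_optimal_close_to_ll_optimal:
  assumes y0: "ll_optimal l nx ny C D b d x y0" and "0 \<le> \<eta>"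
    and primal: "\<forall>i<l. rhs x i - \<eta> \<le> (\<Sum>j<ny. real_of_rat (D i j) * yh j)"
    and obj: "(\<Sum>j<ny. real_of_rat (d j) * yh j) \<le> (\<Sum>j<ny. real_of_rat (d j) * y0 j) + \<eta>"
  shows "\<exists>y. ll_optimal l nx ny C D b d x y \<and> (\<Sum>j<ny. \<bar>y j - yh j\<bar>) \<le> \<Omega> ^ 3 * \<eta>"
proof -
  obtain L where L: "1 \<le> L" "L \<le> W" "\<forall>i<l. \<forall>j<ny. L * real_of_rat (D i j) \<in> \<int>"
    "\<forall>j<ny. L * real_of_rat (d j) \<in> \<int>" "\<And>q. size_rat q \<le> data_size \<Longrightarrow> \<bar>L * real_of_rat q\<bar> \<le> W\<^sup>2"
    using scaling_factor by metis
  have scaled: "(\<Sum>j<ny. L * f j * y j) = L * (\<Sum>j<ny. f j * y j)" for f y :: "nat \<Rightarrow> real"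
    by (simp add: sum_distrib_left mult.assoc)
  \<comment> \<open>the system is scaled by \<open>L\<close> to make its matrix integral\<close>
  have "\<exists>y. feasible {..<l} ny (\<lambda>i j. L * real_of_rat (D i j)) (\<lambda>i. L * rhs x i) y
      \<and> (\<Sum>j<ny. L * real_of_rat (d j) * y j) \<le> (\<Sum>j<ny. L * real_of_rat (d j) * y0 j)
      \<and> (\<Sum>j<ny. \<bar>y j - yh j\<bar>) \<le> real ny * hoffman_const (Suc l) ny (W\<^sup>2) * (L * \<eta>)"
  proof (rule near_optimal_close_to_optimal[OF _ _ W_sq_ge_1])
    show "\<forall>i<l. \<forall>j<ny. L * real_of_rat (D i j) \<in> \<int> \<and> \<bar>L * real_of_rat (D i j)\<bar> \<le> W\<^sup>2"
      using L(3,5) entry_size_le_data_size(4) by blast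
    show "\<forall>j<ny. L * real_of_rat (d j) \<in> \<int> \<and> \<bar>L * real_of_rat (d j)\<bar> \<le> W\<^sup>2"
      using L(4,5) entry_size_le_data_size(6) by blast
    show "feasible {..<l} ny (\<lambda>i j. L * real_of_rat (D i j)) (\<lambda>i. L * rhs x i) y0"
      using y0 L(1) by (simp add: ll_optimal_def ll_feasible_iff feasible_scale)
    show "0 \<le> L * \<eta>" using L(1) \<open>0 \<le> \<eta>\<close> by simp
    show "\<forall>i<l. L * rhs x i - L * \<eta> \<le> (\<Sum>j<ny. L * real_of_rat (D i j) * yh j)"
      using primal L(1) by (simp add: scaled flip: right_diff_distrib)
    show "(\<Sum>j<ny. L * real_of_rat (d j) * yh j) \<le> (\<Sum>j<ny. L * real_of_rat (d j) * y0 j) + L * \<eta>"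
      using obj L(1) by (simp add: scaled flip: distrib_left)
  qed
  then obtain y where y: "ll_feasible l nx ny C D b x y"
    "(\<Sum>j<ny. real_of_rat (d j) * y j) \<le> (\<Sum>j<ny. real_of_rat (d j) * y0 j)"
    "(\<Sum>j<ny. \<bar>y j - yh j\<bar>) \<le> real ny * hoffman_const (Suc l) ny (W\<^sup>2) * (L * \<eta>)"
    using L(1) by (auto simp: scaled feasible_scale ll_feasible_iff)
  have "ll_optimal l nx ny C D b d x y" using y(1,2) y0 by (auto simp: ll_optimal_def)
  moreover have "real ny * hoffman_const (Suc l) ny (W\<^sup>2) * (L * \<eta>) \<le> \<Omega> * \<Omega> * (\<Omega> * \<eta>)"
    using Suc_le_W[OF dims_le_data_size(3)] W_le_\<Omega> hoffman_const_le_\<Omega> dims_le_data_size L(1,2)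
      \<open>0 \<le> \<eta>\<close>
    by (intro mult_mono) (auto simp: hoffman_const_nonneg)
  ultimately show ?thesis using y(3) by (auto simp: power3_eq_cube mult_ac)
qed

lemma approx_solution_close_to_optimal:
  assumes x: "ul_feasible m nx A a x" and "0 < \<epsilon>"
    and primal: "\<forall>i<l. mat_vec D ny yh i \<ge> real_of_rat (b i) - mat_vec C nx x i - \<epsilon>"
    and dual: "\<forall>j<ny. \<bar>(\<Sum>i<l. real_of_rat (D i j) * zh i) - real_of_rat (d j)\<bar> \<le> \<epsilon>"
      "\<forall>i<l. zh i \<ge> - \<epsilon>"
    and gap: "(\<Sum>j<ny. real_of_rat (d j) * yh j)
      - (\<Sum>i<l. (real_of_rat (b i) - mat_vec C nx x i) * zh i) \<le> \<epsilon>"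
  shows "\<exists>ys. ll_optimal l nx ny C D b d x ys \<and> (\<Sum>j<ny. \<bar>ys j - yh j\<bar>) \<le> \<epsilon> * real_of_rat \<kappa>"
proof -
  obtain y0 where y0: "ll_optimal l nx ny C D b d x y0" using ll_optimal_exists[OF x] by blast
  then have y0_feasible: "feasible {..<l} ny (\<lambda>i j. real_of_rat (D i j)) (rhs x) y0"
    by (simp add: ll_optimal_def ll_feasible_iff)
  define K where "K = 1 + (\<Sum>j<ny. \<bar>y0 j\<bar>) + (\<Sum>i<l. (\<Sum>j<ny. real_of_rat (D i j) * y0 j) - rhs x i)"
  have "1 \<le> K"
    using y0_feasible by (auto simp: K_def feasible_def intro!: sum_nonneg add_nonneg_nonneg)
  have "K \<le> \<Omega> ^ 13" using slack_bound[OF x] y0 by (simp add: K_def ll_optimal_def)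
  have "\<exists>y. ll_optimal l nx ny C D b d x y \<and> (\<Sum>j<ny. \<bar>y j - yh j\<bar>) \<le> \<Omega> ^ 3 * (\<epsilon> * K)"
  proof (rule near_optimal_close_to_ll_optimal[OF y0])
    show "0 \<le> \<epsilon> * K" using \<open>0 < \<epsilon>\<close> \<open>1 \<le> K\<close> by simp
    have "\<epsilon> \<le> \<epsilon> * K" using \<open>0 < \<epsilon>\<close> \<open>1 \<le> K\<close> by simp
    then show "\<forall>i<l. rhs x i - \<epsilon> * K \<le> (\<Sum>j<ny. real_of_rat (D i j) * yh j)"
      using primal by (force simp: mat_vec_def)
    show "(\<Sum>j<ny. real_of_rat (d j) * yh j) \<le> (\<Sum>j<ny. real_of_rat (d j) * y0 j) + \<epsilon> * K"
      using approx_weak_duality[OF y0_feasible dual gap] by (simp add: K_def)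
  qed
  moreover have "\<Omega> ^ 3 * (\<epsilon> * K) \<le> \<epsilon> * real_of_rat \<kappa>"
    using mult_le_\<Omega>_pow[of "\<Omega> ^ 3" 3 K 13] \<open>K \<le> \<Omega> ^ 13\<close> \<open>1 \<le> K\<close> \<open>0 < \<epsilon>\<close>
    by (simp add: of_rat_\<kappa>)
  ultimately show ?thesis by (meson order_trans)
qed

end

theorem lemma5p4:
  "\<exists>c k :: nat. \<forall>(m::nat) (nx::nat) (l::nat) (ny::nat)
      (A :: nat \<Rightarrow> nat \<Rightarrow> rat) (a :: nat \<Rightarrow> rat)
      (C :: nat \<Rightarrow> nat \<Rightarrow> rat) (D :: nat \<Rightarrow> nat \<Rightarrow> rat)
      (b :: nat \<Rightarrow> rat) (d :: nat \<Rightarrow> rat).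
     (let S = {(x, y). x \<in> Defs.vec_set nx \<and> y \<in> Defs.vec_set ny \<and>
                       ul_feasible m nx A a x \<and> ll_feasible l nx ny C D b x y}
      in S \<noteq> {} \<and> compact S) \<and>
     (\<forall>x. ul_feasible m nx A a x \<longrightarrow> (\<exists>y. ll_feasible l nx ny C D b x y)) \<and>
     (\<exists>M. \<forall>x. ul_feasible m nx A a x \<longrightarrow> (\<forall>j<nx. \<bar>x j\<bar> \<le> M))
     \<longrightarrow>
     (\<exists>\<kappa> :: rat. \<kappa> > 0 \<and>
        size_rat \<kappa> \<le> c * (size_mat m nx A + size_vec m a + size_mat l nx C +
                           size_mat l ny D + size_vec l b + size_vec ny d + 1) ^ k \<and>
        (\<forall>(\<epsilon>::real) (x :: nat \<Rightarrow> real) (yh :: nat \<Rightarrow> real) (zh :: nat \<Rightarrow> real).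
           \<epsilon> > 0 \<longrightarrow> ul_feasible m nx A a x \<longrightarrow>
           (\<forall>i<l. mat_vec D ny yh i \<ge> real_of_rat (b i) - mat_vec C nx x i - \<epsilon>) \<longrightarrow>
           (\<forall>j<ny. \<bar>(\<Sum>i<l. real_of_rat (D i j) * zh i) - real_of_rat (d j)\<bar> \<le> \<epsilon>) \<longrightarrow>
           (\<forall>i<l. zh i \<ge> - \<epsilon>) \<longrightarrow>
           (\<Sum>j<ny. real_of_rat (d j) * yh j)
             - (\<Sum>i<l. (real_of_rat (b i) - mat_vec C nx x i) * zh i) \<le> \<epsilon> \<longrightarrow>
           (\<exists>ys. ll_optimal l nx ny C D b d x ys \<and>
                 (\<Sum>j<ny. \<bar>ys j - yh j\<bar>) \<le> \<epsilon> * real_of_rat \<kappa>)))"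
  apply (rule exI[of _ "116::nat"], rule exI[of _ "2::nat"], intro allI impI)
  subgoal premises hyps for m nx l ny A a C D b d
  proof -
    interpret bilevel_lp m nx l ny A C D a b d using hyps by unfold_locales (auto simp: Let_def)
    show ?thesis
      unfolding data_size_def[symmetric]
      using \<kappa>_pos size_rat_\<kappa> approx_solution_close_to_optimal by blast
  qed
  done

end
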